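(* Let $H$ be a finite-dimensional Hopf algebra over a field $k$, $R\subseteq H$ a Hopf subalgebra, $Q=H/R^+H$, and for $n\ge0$ let $E_n=\mathrm{End}(Q^{\otimes n})_H$, acting on $Q^{\otimes(n+m)}$ (for $m\ge0$) by $\alpha\mapsto\alpha\otimes\mathrm{id}_Q^{\otimes m}$, making $Q^{\otimes(n+m)}$ an $E_n$-$H$-bimodule. Then for every $n\in\mathbb{N}$, $Q^{\otimes(n+1)}$ is isomorphic to a direct summand of $Q^{\otimes(n+2)}$ as $E_n$-$H$-bimodules. Consequently $Q^{\otimes(n+1)}$ is isomorphic to a direct summand of $Q^{\otimes(n+m)}$ as $E_n$-$H$-bimodules for any $m\ge n+1\ge 2$. If moreover $H$ is a semisimple extension of $R$, then $Q^{\otimes n}$ is isomorphic to a direct summand of $Q^{\otimes(n+m)}$ as $E_n$-$H$-bimodules for any $m\ge n\ge0$.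
   Context: $R^+=\ker\varepsilon\cap R$; $Q=H/R^+H$ is a right $H$-module coalgebra with coproduct $\overline{h}\mapsto\overline{h_{(1)}}\otimes\overline{h_{(2)}}$ and counit $\overline{h}\mapsto\varepsilon(h)$. $Q^{\otimes n}$ is the $n$-fold tensor power in mod-$H$ (tensor over $k$, diagonal $H$-action), $Q^{\otimes 0}=k$ with trivial action. $H$ is a (right) semisimple extension of $R$ if every short exact sequence of right $H$-modules which splits as a sequence of $R$-modules splits as $H$-modules; for Hopf subalgebra pairs this is equivalent to the existence of $t\in Q$ with $th=\varepsilon(h)t$ for all $h\in H$ and $\varepsilon_Q(t)=1$. *)

theory Defs
  imports Main
begin

text \<open>A finite-dimensional Hopf algebra H over the field k is given by a finite basis
indexed by the finite type 'b; vectors of H are functions 'b => 'k.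
Structure constants: e_a e_b = sum_l hm a b l e_l; 1 = sum_a hu a e_a;
Delta(e_c) = sum_(i,j) hd c i j e_i (x) e_j; eps(e_c) = he c; S(e_a) = sum_b hS a b e_b.\<close>

record ('k, 'b) hopf =
  hm :: "'b \<Rightarrow> 'b \<Rightarrow> 'b \<Rightarrow> 'k"
  hu :: "'b \<Rightarrow> 'k"
  hd :: "'b \<Rightarrow> 'b \<Rightarrow> 'b \<Rightarrow> 'k"
  he :: "'b \<Rightarrow> 'k"
  hS :: "'b \<Rightarrow> 'b \<Rightarrow> 'k"

definition kd :: "'b \<Rightarrow> 'b \<Rightarrow> 'k::field" where
  "kd a b = (if a = b then 1 else 0)"

definition hopf_algebra :: "('k::field, 'b::finite) hopf \<Rightarrow> bool" where
  "hopf_algebra H \<longleftrightarrow>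
     \<comment> \<open>associativity\<close>
     (\<forall>a b c l. (\<Sum>p\<in>UNIV. hm H a b p * hm H p c l) = (\<Sum>p\<in>UNIV. hm H b c p * hm H a p l)) \<and>
     \<comment> \<open>unit\<close>
     (\<forall>b l. (\<Sum>a\<in>UNIV. hu H a * hm H a b l) = kd b l) \<and>
     (\<forall>b l. (\<Sum>a\<in>UNIV. hu H a * hm H b a l) = kd b l) \<and>
     \<comment> \<open>coassociativity\<close>
     (\<forall>c i j l. (\<Sum>a\<in>UNIV. hd H c a l * hd H a i j) = (\<Sum>a\<in>UNIV. hd H c i a * hd H a j l)) \<and>
     \<comment> \<open>counit\<close>
     (\<forall>c j. (\<Sum>a\<in>UNIV. hd H c a j * he H a) = kd c j) \<and>
     (\<forall>c j. (\<Sum>a\<in>UNIV. hd H c j a * he H a) = kd c j) \<and>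
     \<comment> \<open>comultiplication is an algebra map\<close>
     (\<forall>a b i j. (\<Sum>c\<in>UNIV. hm H a b c * hd H c i j) =
        (\<Sum>p\<in>UNIV. \<Sum>q\<in>UNIV. \<Sum>r\<in>UNIV. \<Sum>s\<in>UNIV.
            hd H a p q * hd H b r s * hm H p r i * hm H q s j)) \<and>
     (\<forall>i j. (\<Sum>c\<in>UNIV. hu H c * hd H c i j) = hu H i * hu H j) \<and>
     \<comment> \<open>counit is an algebra map\<close>
     (\<forall>a b. (\<Sum>c\<in>UNIV. hm H a b c * he H c) = he H a * he H b) \<and>
     (\<Sum>c\<in>UNIV. hu H c * he H c) = 1 \<and>
     \<comment> \<open>antipode\<close>
     (\<forall>c l. (\<Sum>p\<in>UNIV. \<Sum>q\<in>UNIV. hd H c p q * (\<Sum>r\<in>UNIV. hS H p r * hm H r q l))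
              = he H c * hu H l) \<and>
     (\<forall>c l. (\<Sum>p\<in>UNIV. \<Sum>q\<in>UNIV. hd H c p q * (\<Sum>r\<in>UNIV. hS H q r * hm H p r l))
              = he H c * hu H l)"

definition vadd :: "('a \<Rightarrow> 'k::field) \<Rightarrow> ('a \<Rightarrow> 'k) \<Rightarrow> ('a \<Rightarrow> 'k)" where
  "vadd x y = (\<lambda>a. x a + y a)"

definition vsub :: "('a \<Rightarrow> 'k::field) \<Rightarrow> ('a \<Rightarrow> 'k) \<Rightarrow> ('a \<Rightarrow> 'k)" where
  "vsub x y = (\<lambda>a. x a - y a)"

definition vscale :: "'k::field \<Rightarrow> ('a \<Rightarrow> 'k) \<Rightarrow> ('a \<Rightarrow> 'k)" where
  "vscale c x = (\<lambda>a. c * x a)"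

definition vspan :: "('a \<Rightarrow> 'k::field) set \<Rightarrow> ('a \<Rightarrow> 'k) set" where
  "vspan S = {x. \<exists>F c. finite F \<and> F \<subseteq> S \<and> x = (\<lambda>a. \<Sum>v\<in>F. c v * v a)}"

definition subspace_of :: "('a \<Rightarrow> 'k::field) set \<Rightarrow> bool" where
  "subspace_of V \<longleftrightarrow> (\<lambda>_. 0) \<in> V \<and> (\<forall>x\<in>V. \<forall>y\<in>V. vadd x y \<in> V) \<and> (\<forall>c. \<forall>x\<in>V. vscale c x \<in> V)"

definition lin_on :: "('a \<Rightarrow> 'k::field) set \<Rightarrow> ('c \<Rightarrow> 'k) set \<Rightarrow> (('a \<Rightarrow> 'k) \<Rightarrow> ('c \<Rightarrow> 'k)) \<Rightarrow> bool" where
  "lin_on A B f \<longleftrightarrow> f ` A \<subseteq> B \<and>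
     (\<forall>x\<in>A. \<forall>y\<in>A. f (vadd x y) = vadd (f x) (f y)) \<and>
     (\<forall>c. \<forall>x\<in>A. f (vscale c x) = vscale c (f x))"

definition hmul :: "('k::field, 'b::finite) hopf \<Rightarrow> ('b \<Rightarrow> 'k) \<Rightarrow> ('b \<Rightarrow> 'k) \<Rightarrow> ('b \<Rightarrow> 'k)" where
  "hmul H x y = (\<lambda>l. \<Sum>i\<in>UNIV. \<Sum>j\<in>UNIV. x i * y j * hm H i j l)"

definition hunit :: "('k::field, 'b::finite) hopf \<Rightarrow> ('b \<Rightarrow> 'k)" where
  "hunit H = hu H"

definition hcomul :: "('k::field, 'b::finite) hopf \<Rightarrow> ('b \<Rightarrow> 'k) \<Rightarrow> ('b \<times> 'b \<Rightarrow> 'k)" where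
  "hcomul H x = (\<lambda>(j, l). \<Sum>i\<in>UNIV. x i * hd H i j l)"

definition heps :: "('k::field, 'b::finite) hopf \<Rightarrow> ('b \<Rightarrow> 'k) \<Rightarrow> 'k" where
  "heps H x = (\<Sum>i\<in>UNIV. x i * he H i)"

definition hant :: "('k::field, 'b::finite) hopf \<Rightarrow> ('b \<Rightarrow> 'k) \<Rightarrow> ('b \<Rightarrow> 'k)" where
  "hant H x = (\<lambda>j. \<Sum>i\<in>UNIV. x i * hS H i j)"

definition tensor2 :: "('b \<Rightarrow> 'k::field) \<Rightarrow> ('b \<Rightarrow> 'k) \<Rightarrow> ('b \<times> 'b \<Rightarrow> 'k)" where
  "tensor2 x y = (\<lambda>(i, j). x i * y j)"

definition hopf_subalgebra :: "('k::field, 'b::finite) hopf \<Rightarrow> ('b \<Rightarrow> 'k) set \<Rightarrow> bool" where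
  "hopf_subalgebra H R \<longleftrightarrow> subspace_of R \<and> hunit H \<in> R \<and>
     (\<forall>x\<in>R. \<forall>y\<in>R. hmul H x y \<in> R) \<and>
     (\<forall>x\<in>R. hcomul H x \<in> vspan {tensor2 r s | r s. r \<in> R \<and> s \<in> R}) \<and>
     (\<forall>x\<in>R. hant H x \<in> R)"

text \<open>The right ideal R^+ H; Q = H / R^+ H.\<close>
definition Rplus_H :: "('k::field, 'b::finite) hopf \<Rightarrow> ('b \<Rightarrow> 'k) set \<Rightarrow> ('b \<Rightarrow> 'k) set" where
  "Rplus_H H R = vspan {hmul H r h | r h. r \<in> R \<and> heps H r = 0}"

text \<open>H^(x)n is represented as functions on words of length n (coefficients w.r.t. the
tensor basis e_(w_1) (x) ... (x) e_(w_n)), vanishing off words of length n.\<close>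
definition tpow :: "nat \<Rightarrow> ('b list \<Rightarrow> 'k::field) set" where
  "tpow n = {x. \<forall>w. length w \<noteq> n \<longrightarrow> x w = 0}"

definition words :: "nat \<Rightarrow> 'b list set" where
  "words n = {w. length w = n}"

definition tens :: "('b \<Rightarrow> 'k::field) list \<Rightarrow> ('b list \<Rightarrow> 'k)" where
  "tens hs = (\<lambda>w. if length w = length hs then (\<Prod>i<length hs. (hs ! i) (w ! i)) else 0)"

text \<open>Kernel of H^(x)n -> Q^(x)n: spanned by pure tensors with some factor in R^+ H.
Thus Q^(x)n is represented as tpow n modulo qker H R n.\<close>
definition qker :: "('k::field, 'b::finite) hopf \<Rightarrow> ('b \<Rightarrow> 'k) set \<Rightarrow> nat \<Rightarrow> ('b list \<Rightarrow> 'k) set" where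
  "qker H R n = vspan {tens hs | hs. length hs = n \<and> (\<exists>i<n. hs ! i \<in> Rplus_H H R)}"

text \<open>Iterated comultiplication Delta^(n): H -> H^(x)n, with Delta^(0) = eps,
Delta^(n+1) = (id (x) Delta^(n)) Delta.\<close>
fun cop :: "('k::field, 'b::finite) hopf \<Rightarrow> nat \<Rightarrow> 'b \<Rightarrow> 'b list \<Rightarrow> 'k" where
  "cop H 0 c w = (if w = [] then he H c else 0)"
| "cop H (Suc n) c w = (case w of [] \<Rightarrow> 0 | d # v \<Rightarrow> (\<Sum>a\<in>UNIV. hd H c d a * cop H n a v))"

text \<open>Diagonal right action of H on H^(x)n: x . h = x * Delta^(n)(h) (componentwise product).
For n = 0 this is the trivial action x . h = eps(h) x.\<close>
definition tact :: "('k::field, 'b::finite) hopf \<Rightarrow> nat \<Rightarrow> ('b list \<Rightarrow> 'k) \<Rightarrow> ('b \<Rightarrow> 'k) \<Rightarrow> ('b list \<Rightarrow> 'k)" where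
  "tact H n x h = (\<lambda>v. if length v = n then
      (\<Sum>c\<in>UNIV. h c * (\<Sum>w\<in>words n. \<Sum>u\<in>words n.
          x w * cop H n c u * (\<Prod>i<n. hm H (w ! i) (u ! i) (v ! i))))
      else 0)"

text \<open>Lifts to H^(x)n of elements of E_n: linear maps preserving the kernel whose induced
map on Q^(x)n is H-linear. Every element of E_n has such a lift.\<close>
definition endo :: "('k::field, 'b::finite) hopf \<Rightarrow> ('b \<Rightarrow> 'k) set \<Rightarrow> nat
    \<Rightarrow> (('b list \<Rightarrow> 'k) \<Rightarrow> ('b list \<Rightarrow> 'k)) \<Rightarrow> bool" where
  "endo H R n f \<longleftrightarrow> lin_on (tpow n) (tpow n) f \<and> f ` qker H R n \<subseteq> qker H R n \<and>
     (\<forall>x\<in>tpow n. \<forall>h. vsub (f (tact H n x h)) (tact H n (f x) h) \<in> qker H R n)"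

text \<open>alpha |-> alpha (x) id^(x)m on H^(x)(n+m).\<close>
definition ext_id :: "(('b list \<Rightarrow> 'k::field) \<Rightarrow> ('b list \<Rightarrow> 'k)) \<Rightarrow> nat \<Rightarrow> nat
    \<Rightarrow> ('b list \<Rightarrow> 'k) \<Rightarrow> ('b list \<Rightarrow> 'k)" where
  "ext_id f n m y = (\<lambda>v. if length v = n + m then
      f (\<lambda>u. if length u = n then y (u @ drop n v) else 0) (take n v) else 0)"

text \<open>(Lifts of) E_n-H-bimodule maps Q^(x)a -> Q^(x)b, for a, b >= n.\<close>
definition bimap :: "('k::field, 'b::finite) hopf \<Rightarrow> ('b \<Rightarrow> 'k) set \<Rightarrow> nat \<Rightarrow> nat \<Rightarrow> nat
    \<Rightarrow> (('b list \<Rightarrow> 'k) \<Rightarrow> ('b list \<Rightarrow> 'k)) \<Rightarrow> bool" where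
  "bimap H R n a b \<phi> \<longleftrightarrow> lin_on (tpow a) (tpow b) \<phi> \<and> \<phi> ` qker H R a \<subseteq> qker H R b \<and>
     (\<forall>x\<in>tpow a. \<forall>h. vsub (\<phi> (tact H a x h)) (tact H b (\<phi> x) h) \<in> qker H R b) \<and>
     (\<forall>f. endo H R n f \<longrightarrow>
        (\<forall>x\<in>tpow a. vsub (\<phi> (ext_id f n (a - n) x)) (ext_id f n (b - n) (\<phi> x)) \<in> qker H R b))"

definition bimod_summand :: "('k::field, 'b::finite) hopf \<Rightarrow> ('b \<Rightarrow> 'k) set \<Rightarrow> nat \<Rightarrow> nat \<Rightarrow> nat \<Rightarrow> bool" where
  "bimod_summand H R n a b \<longleftrightarrow> (\<exists>i p. bimap H R n a b i \<and> bimap H R n b a p \<and>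
     (\<forall>x\<in>tpow a. vsub (p (i x)) x \<in> qker H R a))"

text \<open>H is a semisimple extension of R (characterization via a normalized right
integral t in Q: t h = eps(h) t for all h, eps_Q(t) = 1).\<close>
definition semisimple_ext :: "('k::field, 'b::finite) hopf \<Rightarrow> ('b \<Rightarrow> 'k) set \<Rightarrow> bool" where
  "semisimple_ext H R \<longleftrightarrow> (\<exists>t. (\<forall>h. vsub (hmul H t h) (vscale (heps H h) t) \<in> Rplus_H H R)
      \<and> heps H t = 1)"

end

theory Submission
  imports Defs
begin

text \<open>
  Model Q^(x)k as H^(x)k modulo the span of the pure tensors having a factor in R^+ H; the
  algebra E_n acts through lifts on the first n factors. A map id^(x)j (x) \<kappa> that only touches
  the last factors (j \<ge> n) commutes with this action for free, descends to the quotients as soon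
  as \<kappa> does, and is H-linear modulo the kernel as soon as \<kappa> is, because the diagonal action
  splits by Sweedler's formula x h = x h_(1) (x) h_(2).

  Two such maps split off the summands. Since \<Delta> is an algebra map and
  \<Delta>(R^+) \<subseteq> R^+ (x) R + R (x) R^+, also \<Delta>(R^+ H) \<subseteq> R^+ H (x) H + H (x) R^+ H, so
  id (x) \<Delta> : Q^(x)(j+1) \<rightarrow> Q^(x)(j+2) is a bimodule map, split by id (x) \<epsilon>. If t is a normalized
  integral of Q, then (x (x) t) h = x h_(1) (x) t h_(2) = x h (x) t in Q^(x)(j+1), so x \<mapsto> x (x) t
  is a bimodule map, again split by id (x) \<epsilon>. Composing these one-step splittings gives the
  summands for all larger tensor powers.
\<close>

section \<open>Coordinates: words, Hopf algebra axioms and the diagonal action\<close>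

lemma finite_words [simp]: "finite (words n :: 'b::finite list set)"
  unfolding words_def using finite_lists_length_eq[of "UNIV :: 'b set" n] by simp

lemma words_0: "words 0 = {[]}"
  by (auto simp: words_def)

lemma sum_words_append:
  "(\<Sum>w\<in>words (p + q). f w) = (\<Sum>u\<in>words p. \<Sum>w\<in>words q. (f (u @ w) :: 'k::comm_monoid_add))"
proof -
  have img: "words (p + q) = (\<lambda>(u, w). u @ w) ` (words p \<times> words q)"
  proof
    show "words (p + q) \<subseteq> (\<lambda>(u, w). u @ w) ` (words p \<times> words q)"
    proof
      fix x assume "x \<in> words (p + q)"
      then have "x = (\<lambda>(u, w). u @ w) (take p x, drop p x)" "(take p x, drop p x) \<in> words p \<times> words q"
        by (auto simp: words_def)
      then show "x \<in> (\<lambda>(u, w). u @ w) ` (words p \<times> words q)" by blast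
    qed
  qed (auto simp: words_def)
  have "inj_on (\<lambda>(u, w). u @ w) (words p \<times> words q)"
    by (auto simp: inj_on_def words_def)
  then have "(\<Sum>w\<in>words (p + q). f w) = (\<Sum>x\<in>words p \<times> words q. f ((\<lambda>(u, w). u @ w) x))"
    unfolding img by (rule sum.reindex[unfolded comp_def])
  then show ?thesis by (simp add: sum.cartesian_product split_def)
qed

lemma sum_words_1:
  fixes f :: "'b list \<Rightarrow> 'k::comm_monoid_add"
  shows "(\<Sum>w\<in>words (Suc 0). f w) = (\<Sum>d\<in>UNIV. f [d])"
proof -
  have "words (Suc 0) = range (\<lambda>d::'b. [d])"
    by (auto simp: words_def length_Suc_conv)
  then show ?thesis by (simp add: sum.reindex inj_on_def)
qed

lemma sum_words_2:
  "(\<Sum>w\<in>words (Suc (Suc 0)). f w) = (\<Sum>d\<in>UNIV. \<Sum>e\<in>UNIV. (f [d, e] :: 'k::comm_monoid_add))"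
  using sum_words_append[where p="Suc 0" and q="Suc 0" and f=f] by (simp add: sum_words_1)

lemma sum_kd_left [simp]: "(\<Sum>b\<in>(UNIV::'b::finite set). kd c b * f b) = (f c :: 'k::field)"
  by (simp add: kd_def if_distrib if_distribR cong: if_cong)

lemma sum_kd_right [simp]: "(\<Sum>b\<in>(UNIV::'b::finite set). f b * kd b c) = (f c :: 'k::field)"
  by (simp add: kd_def if_distrib if_distribR cong: if_cong)

lemma sum_rotate3:
  "(\<Sum>x\<in>A. \<Sum>y\<in>B. \<Sum>z\<in>C. f x y z) = (\<Sum>y\<in>B. \<Sum>z\<in>C. \<Sum>x\<in>A. (f x y z :: 'k::comm_monoid_add))"
  by (subst sum.swap, rule sum.cong[OF refl], rule sum.swap)

lemma sum_swap_pairs: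
  "(\<Sum>x\<in>A. \<Sum>y\<in>B. \<Sum>z\<in>C. \<Sum>w\<in>D. f x y z w)
     = (\<Sum>z\<in>C. \<Sum>w\<in>D. \<Sum>x\<in>A. \<Sum>y\<in>B. (f x y z w :: 'k::comm_monoid_add))"
proof -
  have "(\<Sum>x\<in>A. \<Sum>y\<in>B. \<Sum>z\<in>C. \<Sum>w\<in>D. f x y z w) = (\<Sum>x\<in>A. \<Sum>z\<in>C. \<Sum>w\<in>D. \<Sum>y\<in>B. f x y z w)"
    by (rule sum.cong[OF refl], rule sum_rotate3)
  also have "\<dots> = (\<Sum>z\<in>C. \<Sum>w\<in>D. \<Sum>x\<in>A. \<Sum>y\<in>B. f x y z w)"
    by (rule sum_rotate3)
  finally show ?thesis .
qed

lemma prod_lessThan_add: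
  "(\<Prod>i<(p::nat) + q. g i) = (\<Prod>i<p. g i) * (\<Prod>i<q. (g (p + i) :: 'k::comm_monoid_mult))"
  by (induction q) (simp_all add: mult_ac)

context
  fixes H :: "('k::field, 'b::finite) hopf"
  assumes H: "hopf_algebra H"
begin

lemma hopf_coassoc: "(\<Sum>a\<in>UNIV. hd H c a l * hd H a i j) = (\<Sum>a\<in>UNIV. hd H c i a * hd H a j l)"
  using H unfolding hopf_algebra_def by blast

lemma hopf_counit_left: "(\<Sum>a\<in>UNIV. hd H c a j * he H a) = kd c j"
  using H unfolding hopf_algebra_def by blast

lemma hopf_counit_right: "(\<Sum>a\<in>UNIV. hd H c j a * he H a) = kd c j"
  using H unfolding hopf_algebra_def by blast

lemma hopf_comul_mult:
  "(\<Sum>c\<in>UNIV. hm H a b c * hd H c i j) =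
     (\<Sum>p\<in>UNIV. \<Sum>q\<in>UNIV. \<Sum>r\<in>UNIV. \<Sum>s\<in>UNIV. hd H a p q * hd H b r s * hm H p r i * hm H q s j)"
  using H unfolding hopf_algebra_def by blast

lemma hopf_counit_mult: "(\<Sum>c\<in>UNIV. hm H a b c * he H c) = he H a * he H b"
  using H unfolding hopf_algebra_def by blast

lemma hopf_counit_unit: "heps H (hu H) = 1"
  using H unfolding hopf_algebra_def heps_def by blast

end

lemma cop_append:
  assumes H: "hopf_algebra H"
  shows "length u = p \<Longrightarrow>
    cop H (p + q) c (u @ w) = (\<Sum>a\<in>UNIV. \<Sum>b\<in>UNIV. hd H c a b * cop H p a u * cop H q b w)"
proof (induction u arbitrary: p c)
  case Nil
  have "(\<Sum>a\<in>UNIV. \<Sum>b\<in>UNIV. hd H c a b * cop H 0 a [] * cop H q b w)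
      = (\<Sum>b\<in>UNIV. (\<Sum>a\<in>UNIV. hd H c a b * he H a) * cop H q b w)"
    by (simp add: sum_distrib_right, subst sum.swap, simp add: mult_ac)
  then show ?case using Nil by (simp add: hopf_counit_left[OF H])
next
  case (Cons d u)
  then obtain p' where p: "p = Suc p'" "length u = p'" by auto
  have "cop H (p + q) c ((d # u) @ w)
      = (\<Sum>a\<in>UNIV. \<Sum>a'\<in>UNIV. \<Sum>b\<in>UNIV. hd H c d a * hd H a a' b * (cop H p' a' u * cop H q b w))"
    using p Cons.IH[OF p(2)] by (simp add: sum_distrib_left mult.assoc)
  also have "\<dots> = (\<Sum>a'\<in>UNIV. \<Sum>b\<in>UNIV. (\<Sum>a\<in>UNIV. hd H c d a * hd H a a' b) * (cop H p' a' u * cop H q b w))"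
    by (subst sum_rotate3) (simp add: sum_distrib_right)
  also have "\<dots> = (\<Sum>a'\<in>UNIV. \<Sum>b\<in>UNIV. (\<Sum>a\<in>UNIV. hd H c a b * hd H a d a') * (cop H p' a' u * cop H q b w))"
    by (simp add: hopf_coassoc[OF H])
  also have "\<dots> = (\<Sum>a'\<in>UNIV. \<Sum>b\<in>UNIV. \<Sum>a\<in>UNIV. hd H c a b * hd H a d a' * (cop H p' a' u * cop H q b w))"
    by (simp add: sum_distrib_right)
  also have "\<dots> = (\<Sum>a\<in>UNIV. \<Sum>b\<in>UNIV. \<Sum>a'\<in>UNIV. hd H c a b * hd H a d a' * (cop H p' a' u * cop H q b w))"
    by (subst sum.swap) (rule sum_rotate3)
  also have "\<dots> = (\<Sum>a\<in>UNIV. \<Sum>b\<in>UNIV. hd H c a b * cop H p a (d # u) * cop H q b w)"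
    using p by (simp add: sum_distrib_left sum_distrib_right mult_ac)
  finally show ?case .
qed

text \<open>The coefficient of e_v in e_w \<cdot> e_c for the diagonal action of H on H^(x)k.\<close>

definition tact_coeff :: "('k::field, 'b::finite) hopf \<Rightarrow> nat \<Rightarrow> 'b \<Rightarrow> 'b list \<Rightarrow> 'b list \<Rightarrow> 'k" where
  "tact_coeff H k c w v = (\<Sum>u\<in>words k. cop H k c u * (\<Prod>i<k. hm H (w ! i) (u ! i) (v ! i)))"

lemma tact_eq_tact_coeff:
  "length v = k \<Longrightarrow> tact H k x h v = (\<Sum>c\<in>UNIV. h c * (\<Sum>w\<in>words k. x w * tact_coeff H k c w v))"
  unfolding tact_def tact_coeff_def by (simp add: sum_distrib_left mult_ac)

lemma tact_coeff_append:
  assumes H: "hopf_algebra H"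
    and len: "length w1 = p" "length v1 = p" "length w2 = q" "length v2 = q"
  shows "tact_coeff H (p + q) c (w1 @ w2) (v1 @ v2)
    = (\<Sum>a\<in>UNIV. \<Sum>b\<in>UNIV. hd H c a b * tact_coeff H p a w1 v1 * tact_coeff H q b w2 v2)"
proof -
  define P1 where "P1 u = (\<Prod>i<p. hm H (w1 ! i) (u ! i) (v1 ! i))" for u
  define P2 where "P2 u = (\<Prod>i<q. hm H (w2 ! i) (u ! i) (v2 ! i))" for u
  have prod: "(\<Prod>i<p + q. hm H ((w1 @ w2) ! i) ((u1 @ u2) ! i) ((v1 @ v2) ! i)) = P1 u1 * P2 u2"
    if "u1 \<in> words p" for u1 u2
    using that len by (simp add: P1_def P2_def prod_lessThan_add nth_append words_def)
  have "tact_coeff H (p + q) c (w1 @ w2) (v1 @ v2) = (\<Sum>u1\<in>words p. \<Sum>u2\<in>words q. \<Sum>a\<in>UNIV. \<Sum>b\<in>UNIV.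
      hd H c a b * (cop H p a u1 * P1 u1) * (cop H q b u2 * P2 u2))"
    unfolding tact_coeff_def sum_words_append
    by (intro sum.cong refl)
       (simp add: prod cop_append[OF H] words_def sum_distrib_left sum_distrib_right mult_ac)
  also have "\<dots> = (\<Sum>a\<in>UNIV. \<Sum>b\<in>UNIV. \<Sum>u1\<in>words p. \<Sum>u2\<in>words q.
      hd H c a b * (cop H p a u1 * P1 u1) * (cop H q b u2 * P2 u2))"
    by (rule sum_swap_pairs)
  also have "\<dots> = (\<Sum>a\<in>UNIV. \<Sum>b\<in>UNIV. hd H c a b * tact_coeff H p a w1 v1 * tact_coeff H q b w2 v2)"
    unfolding tact_coeff_def P1_def P2_def
    by (simp add: sum_distrib_left sum_distrib_right mult_ac)
  finally show ?thesis .
qed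

lemma tact_coeff_Nil: "tact_coeff H 0 c [] [] = he H c"
  by (simp add: tact_coeff_def words_0)

lemma tact_coeff_single: "hopf_algebra H \<Longrightarrow> tact_coeff H (Suc 0) c [b] [a] = hm H b c a"
  by (simp add: tact_coeff_def sum_words_1 hopf_counit_right)

lemma tact_coeff_pair:
  assumes H: "hopf_algebra H"
  shows "tact_coeff H (Suc (Suc 0)) c [d', e'] [d, e]
    = (\<Sum>a\<in>UNIV. \<Sum>b\<in>UNIV. hd H c a b * hm H d' a d * hm H e' b e)"
  using tact_coeff_append[OF H, of "[d']" "Suc 0" "[d]" "[e']" "Suc 0" "[e]" c]
  by (simp add: tact_coeff_single[OF H] mult_ac)

section \<open>Linear algebra and the kernel of H^(x)n \<rightarrow> Q^(x)n\<close>

lemma subspace_zero: "subspace_of V \<Longrightarrow> (\<lambda>_. 0) \<in> V"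
  by (simp add: subspace_of_def)

lemma subspace_add: "subspace_of V \<Longrightarrow> x \<in> V \<Longrightarrow> y \<in> V \<Longrightarrow> (\<lambda>a. x a + y a) \<in> V"
  unfolding subspace_of_def vadd_def by blast

lemma subspace_scale: "subspace_of V \<Longrightarrow> x \<in> V \<Longrightarrow> (\<lambda>a. c * x a) \<in> V"
  unfolding subspace_of_def vscale_def by blast

lemma subspace_vsub:
  assumes V: "subspace_of V" and "x \<in> V" "y \<in> V"
  shows "vsub x y \<in> V"
  using subspace_add[OF V \<open>x \<in> V\<close> subspace_scale[OF V \<open>y \<in> V\<close>, of "-1"]]
  by (simp add: vsub_def)

lemma subspace_sum:
  assumes V: "subspace_of V" and "finite A" and "\<And>a. a \<in> A \<Longrightarrow> g a \<in> V"
  shows "(\<lambda>x. \<Sum>a\<in>A. g a x) \<in> V"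
  using assms(2,3)
proof (induction A rule: finite_induct)
  case empty then show ?case by (simp add: subspace_zero[OF V])
next
  case (insert a A)
  then show ?case using subspace_add[OF V, of "g a" "\<lambda>x. \<Sum>a\<in>A. g a x"] by simp
qed

lemma subspace_sum_scale:
  "subspace_of V \<Longrightarrow> finite A \<Longrightarrow> (\<And>a. a \<in> A \<Longrightarrow> g a \<in> V) \<Longrightarrow> (\<lambda>x. \<Sum>a\<in>A. c a * g a x) \<in> V"
  using subspace_sum[of V A "\<lambda>a x. c a * g a x"] subspace_scale by blast

lemma subspace_UNIV: "subspace_of UNIV"
  by (simp add: subspace_of_def)

lemma tpow_subspace: "subspace_of (tpow n)"
  unfolding subspace_of_def tpow_def vadd_def vscale_def by auto

lemma vspan_subspace: "subspace_of (vspan S)"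
  unfolding subspace_of_def
proof (intro conjI ballI allI)
  show "(\<lambda>_. 0) \<in> vspan S"
    unfolding vspan_def by (rule CollectI, rule exI[of _ "{}"]) simp
next
  fix x y assume "x \<in> vspan S" "y \<in> vspan S"
  then obtain F c G d where F: "finite F" "F \<subseteq> S" "x = (\<lambda>a. \<Sum>v\<in>F. c v * v a)"
    and G: "finite G" "G \<subseteq> S" "y = (\<lambda>a. \<Sum>v\<in>G. d v * v a)"
    unfolding vspan_def by blast
  define e where "e v = (if v \<in> F then c v else 0) + (if v \<in> G then d v else 0)" for v
  have "vadd x y a = (\<Sum>v\<in>F \<union> G. e v * v a)" for a
  proof -
    have "(\<Sum>v\<in>F \<union> G. e v * v a)
        = (\<Sum>v\<in>F \<union> G. if v \<in> F then c v * v a else 0) + (\<Sum>v\<in>F \<union> G. if v \<in> G then d v * v a else 0)"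
      unfolding e_def distrib_right sum.distrib[symmetric] by (rule sum.cong) simp_all
    also have "\<dots> = (\<Sum>v\<in>F. c v * v a) + (\<Sum>v\<in>G. d v * v a)"
      using F(1) G(1) by (simp add: sum.If_cases Int_absorb1 Int_absorb2)
    finally show ?thesis using F G by (simp add: vadd_def)
  qed
  then show "vadd x y \<in> vspan S"
    unfolding vspan_def using F G by (intro CollectI exI[of _ "F \<union> G"] exI[of _ e]) auto
next
  fix k x assume "x \<in> vspan S"
  then obtain F c where F: "finite F" "F \<subseteq> S" "x = (\<lambda>a. \<Sum>v\<in>F. c v * v a)"
    unfolding vspan_def by blast
  then have "vscale k x = (\<lambda>a. \<Sum>v\<in>F. (k * c v) * v a)"
    by (simp add: vscale_def sum_distrib_left mult_ac)
  then show "vscale k x \<in> vspan S"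
    unfolding vspan_def using F by (intro CollectI exI[of _ F] exI[of _ "\<lambda>v. k * c v"]) auto
qed

lemma vspan_superset: "x \<in> S \<Longrightarrow> x \<in> vspan S"
  unfolding vspan_def by (rule CollectI, rule exI[of _ "{x}"], rule exI[of _ "\<lambda>_. 1"]) auto

lemma vspan_minimal:
  assumes "x \<in> vspan S" "subspace_of V" "S \<subseteq> V"
  shows "x \<in> V"
proof -
  obtain F c where F: "finite F" "F \<subseteq> S" "x = (\<lambda>a. \<Sum>v\<in>F. c v * v a)"
    using assms(1) unfolding vspan_def by blast
  show ?thesis
    unfolding F(3) by (rule subspace_sum_scale[OF assms(2) F(1)]) (use F assms in auto)
qed

lemma lin_in: "lin_on A B f \<Longrightarrow> x \<in> A \<Longrightarrow> f x \<in> B"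
  unfolding lin_on_def by auto

lemma lin_scale: "lin_on A B f \<Longrightarrow> x \<in> A \<Longrightarrow> f (\<lambda>a. c * x a) = (\<lambda>a. c * f x a)"
  unfolding lin_on_def vscale_def by auto

lemma lin_sum_scale:
  assumes f: "lin_on A B f" and A: "subspace_of A" and "finite F" and "\<And>v. v \<in> F \<Longrightarrow> g v \<in> A"
  shows "f (\<lambda>x. \<Sum>v\<in>F. c v * g v x) = (\<lambda>y. \<Sum>v\<in>F. c v * f (g v) y)"
  using assms(3,4)
proof (induction F rule: finite_induct)
  case empty
  have "f (vscale 0 (\<lambda>_. 0)) = vscale 0 (f (\<lambda>_. 0))"
    using f subspace_zero[OF A] unfolding lin_on_def by blast
  then show ?case by (simp add: vscale_def)
next
  case (insert a F)
  have "(\<lambda>x. \<Sum>v\<in>F. c v * g v x) \<in> A"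
    using insert by (intro subspace_sum_scale[OF A]) auto
  moreover have "(\<lambda>x. c a * g a x) \<in> A"
    using insert by (intro subspace_scale[OF A]) auto
  ultimately have "f (vadd (\<lambda>x. c a * g a x) (\<lambda>x. \<Sum>v\<in>F. c v * g v x))
      = vadd (f (\<lambda>x. c a * g a x)) (f (\<lambda>x. \<Sum>v\<in>F. c v * g v x))"
    using f unfolding lin_on_def by blast
  then show ?case
    using insert lin_scale[OF f, of "g a" "c a"] by (simp add: vadd_def)
qed

lemma lin_on_comp:
  fixes f :: "('a \<Rightarrow> 'k::field) \<Rightarrow> ('b \<Rightarrow> 'k)" and g :: "('b \<Rightarrow> 'k) \<Rightarrow> ('c \<Rightarrow> 'k)"
  assumes f: "lin_on A B f" and g: "lin_on B C g"
  shows "lin_on A C (\<lambda>x. g (f x))"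
  unfolding lin_on_def
proof (intro conjI ballI allI)
  show "(\<lambda>x. g (f x)) ` A \<subseteq> C"
    using lin_in[OF f] lin_in[OF g] by blast
next
  fix x y assume "x \<in> A" "y \<in> A"
  then show "g (f (vadd x y)) = vadd (g (f x)) (g (f y))"
    using f g lin_in[OF f] unfolding lin_on_def by simp
next
  fix k x assume "x \<in> A"
  then show "g (f (vscale k x)) = vscale k (g (f x))"
    using f g lin_in[OF f] unfolding lin_on_def by simp
qed

lemma lin_vsub:
  assumes f: "lin_on A B f" and A: "subspace_of A" and x: "x \<in> A" and y: "y \<in> A"
  shows "f (vsub x y) = vsub (f x) (f y)"
proof -
  have "(\<lambda>a. (-1) * y a) \<in> A" by (rule subspace_scale[OF A y])
  moreover have "vsub x y = vadd x (\<lambda>a. (-1) * y a)" by (simp add: vsub_def vadd_def)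
  ultimately have "f (vsub x y) = vadd (f x) (f (\<lambda>a. (-1) * y a))"
    using f x unfolding lin_on_def by auto
  then show ?thesis using lin_scale[OF f y, of "-1"] by (simp add: vsub_def vadd_def)
qed

lemma lin_vspan:
  assumes f: "lin_on A B f" and A: "subspace_of A" and "S \<subseteq> A" and V: "subspace_of V"
    and fS: "\<And>s. s \<in> S \<Longrightarrow> f s \<in> V" and x: "x \<in> vspan S"
  shows "f x \<in> V"
proof -
  obtain F c where F: "finite F" "F \<subseteq> S" "x = (\<lambda>a. \<Sum>v\<in>F. c v * v a)"
    using x unfolding vspan_def by blast
  have "f x = (\<lambda>y. \<Sum>v\<in>F. c v * f v y)"
    unfolding F(3) using lin_sum_scale[OF f A F(1), where g="\<lambda>v. v" and c=c] F(2) assms(3) by auto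
  also have "\<dots> \<in> V" using subspace_sum_scale[OF V F(1), where g=f and c=c] F(2) fS by blast
  finally show ?thesis .
qed

lemma lin_tpow_sum:
  assumes f: "lin_on (tpow n) (tpow n) f" and "finite S"
  shows "f (\<lambda>u. if length u = n then (\<Sum>c\<in>S. \<alpha> c * Y c u) else 0)
       = (\<lambda>u'. \<Sum>c\<in>S. \<alpha> c * f (\<lambda>u. if length u = n then Y c u else 0) u')"
proof -
  have "(\<lambda>u. if length u = n then (\<Sum>c\<in>S. \<alpha> c * Y c u) else 0)
      = (\<lambda>u. \<Sum>c\<in>S. \<alpha> c * (\<lambda>u. if length u = n then Y c u else 0) u)"
    by (auto simp: fun_eq_iff)
  then show ?thesis
    using lin_sum_scale[OF f tpow_subspace \<open>finite S\<close>] by (simp add: tpow_def)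
qed

lemma qker_subspace: "subspace_of (qker H R n)"
  unfolding qker_def by (rule vspan_subspace)

lemma Rplus_subspace: "subspace_of (Rplus_H H R)"
  unfolding Rplus_H_def by (rule vspan_subspace)

lemma tens_in_qker: "length hs = n \<Longrightarrow> i < n \<Longrightarrow> hs ! i \<in> Rplus_H H R \<Longrightarrow> tens hs \<in> qker H R n"
  unfolding qker_def by (rule vspan_superset) blast

lemma tens_basis:
  fixes w :: "'b list"
  shows "tens (map kd w) v = (if v = w then 1 else (0::'k::field))"
proof (cases "length v = length w")
  case True
  show ?thesis
  proof (cases "v = w")
    case False
    then obtain i where "i < length w" "v ! i \<noteq> w ! i"
      using True by (auto simp: list_eq_iff_nth_eq)
    then show ?thesis
      using True False by (auto simp: tens_def kd_def intro!: prod_zero[of "{..<length w}"] bexI[of _ i])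
  qed (simp add: tens_def kd_def)
qed (auto simp: tens_def)

lemma tpow_basis_expansion:
  fixes x :: "'b::finite list \<Rightarrow> 'k::field"
  assumes "x \<in> tpow n"
  shows "x = (\<lambda>v. \<Sum>w\<in>words n. x w * tens (map kd w) v)"
proof
  fix v :: "'b list"
  have "(\<Sum>w\<in>words n. x w * tens (map kd w) v) = (\<Sum>w\<in>words n. if v = w then x v else 0)"
    by (rule sum.cong) (auto simp: tens_basis)
  also have "\<dots> = (if v \<in> words n then x v else 0)"
    by (rule sum.delta'[OF finite_words])
  also have "\<dots> = x v"
    using assms by (auto simp: tpow_def words_def)
  finally show "x v = (\<Sum>w\<in>words n. x w * tens (map kd w) v)" ..
qed

definition tprod :: "nat \<Rightarrow> ('b list \<Rightarrow> 'k::field) \<Rightarrow> ('b list \<Rightarrow> 'k) \<Rightarrow> 'b list \<Rightarrow> 'k" where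
  "tprod j A G = (\<lambda>v. A (take j v) * G (drop j v))"

lemma tprod_tens: "length hs = j \<Longrightarrow> tprod j (tens hs) (tens gs) = tens (hs @ gs)"
  by (auto simp: fun_eq_iff tprod_def tens_def prod_lessThan_add nth_append)

lemma qker_tprod_left:
  fixes G :: "'b::finite list \<Rightarrow> 'k::field"
  assumes A: "A \<in> qker H R j" and G: "G \<in> tpow q"
  shows "tprod j A G \<in> qker H R (j + q)"
proof (rule lin_vspan[where f="\<lambda>A. tprod j A G", OF _ subspace_UNIV _ qker_subspace])
  show "lin_on UNIV UNIV (\<lambda>A. tprod j A G)"
    by (auto simp: lin_on_def tprod_def vadd_def vscale_def fun_eq_iff algebra_simps)
  show "A \<in> vspan {tens hs | hs. length hs = j \<and> (\<exists>i<j. hs ! i \<in> Rplus_H H R)}"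
    using A unfolding qker_def .
next
  fix s assume "s \<in> {tens hs | hs. length hs = j \<and> (\<exists>i<j. hs ! i \<in> Rplus_H H R)}"
  then obtain hs i where s: "s = tens hs" and hs: "length hs = j" "i < j" "hs ! i \<in> Rplus_H H R"
    by blast
  have "tprod j s G = (\<lambda>v. \<Sum>u\<in>words q. G u * tens (hs @ map kd u) v)"
    by (subst tpow_basis_expansion[OF G])
       (simp add: s tprod_def sum_distrib_left mult_ac flip: tprod_tens[OF hs(1), unfolded tprod_def])
  also have "\<dots> \<in> qker H R (j + q)"
    using hs by (intro subspace_sum_scale[OF qker_subspace finite_words] tens_in_qker[of _ _ i])
      (auto simp: words_def nth_append)
  finally show "tprod j s G \<in> qker H R (j + q)" .
qed simp

lemma qker_tprod_right:
  fixes A :: "'b::finite list \<Rightarrow> 'k::field"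
  assumes A: "A \<in> tpow j" and G: "G \<in> qker H R q"
  shows "tprod j A G \<in> qker H R (j + q)"
proof (rule lin_vspan[where f="\<lambda>G. tprod j A G", OF _ subspace_UNIV _ qker_subspace])
  show "lin_on UNIV UNIV (\<lambda>G. tprod j A G)"
    by (auto simp: lin_on_def tprod_def vadd_def vscale_def fun_eq_iff algebra_simps)
  show "G \<in> vspan {tens gs | gs. length gs = q \<and> (\<exists>i<q. gs ! i \<in> Rplus_H H R)}"
    using G unfolding qker_def .
next
  fix s assume "s \<in> {tens gs | gs. length gs = q \<and> (\<exists>i<q. gs ! i \<in> Rplus_H H R)}"
  then obtain gs i where s: "s = tens gs" and gs: "length gs = q" "i < q" "gs ! i \<in> Rplus_H H R"
    by blast
  have "tprod j A s = (\<lambda>v. \<Sum>w\<in>words j. A w * tens (map kd w @ gs) v)"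
  proof
    fix v
    have "tprod j A s v = (\<Sum>w\<in>words j. A w * tprod j (tens (map kd w)) (tens gs) v)"
      using fun_cong[OF tpow_basis_expansion[OF A], of "take j v"]
      by (simp add: s tprod_def sum_distrib_right mult.assoc)
    then show "tprod j A s v = (\<Sum>w\<in>words j. A w * tens (map kd w @ gs) v)"
      by (simp add: tprod_tens words_def)
  qed
  also have "\<dots> \<in> qker H R (j + q)"
    using gs by (intro subspace_sum_scale[OF qker_subspace finite_words] tens_in_qker[of _ _ "j + i"])
      (auto simp: words_def nth_append)
  finally show "tprod j A s \<in> qker H R (j + q)" .
qed simp

section \<open>Bimodule summands\<close>

lemma tact_tpow: "tact H n x h \<in> tpow n"
  by (simp add: tact_def tpow_def)

lemma ext_id_tpow: "ext_id f n m y \<in> tpow (n + m)"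
  by (simp add: ext_id_def tpow_def)

lemma lin_qker_cong_trans:
  assumes \<psi>: "lin_on (tpow b) (tpow c) \<psi>" "\<psi> ` qker H R b \<subseteq> qker H R c"
    and uw: "u \<in> tpow b" "w \<in> tpow b" "vsub u w \<in> qker H R b"
    and wz: "vsub (\<psi> w) z \<in> qker H R c"
  shows "vsub (\<psi> u) z \<in> qker H R c"
proof -
  have "\<psi> (vsub u w) \<in> qker H R c"
    using \<psi>(2) uw(3) by blast
  then have "vsub (\<psi> u) (\<psi> w) \<in> qker H R c"
    by (simp add: lin_vsub[OF \<psi>(1) tpow_subspace uw(1,2)])
  from subspace_add[OF qker_subspace this wz] show ?thesis
    by (simp add: vsub_def)
qed

lemma bimap_comp:
  fixes H :: "('k::field, 'b::finite) hopf"
  assumes \<phi>: "bimap H R n a b \<phi>" and \<psi>: "bimap H R n b c \<psi>" and "n \<le> a" "n \<le> b"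
  shows "bimap H R n a c (\<lambda>x. \<psi> (\<phi> x))"
proof -
  have \<phi>l: "lin_on (tpow a) (tpow b) \<phi>" and \<phi>q: "\<phi> ` qker H R a \<subseteq> qker H R b"
    and \<phi>h: "\<And>x h. x \<in> tpow a \<Longrightarrow> vsub (\<phi> (tact H a x h)) (tact H b (\<phi> x) h) \<in> qker H R b"
    and \<phi>e: "\<And>f x. endo H R n f \<Longrightarrow> x \<in> tpow a \<Longrightarrow>
      vsub (\<phi> (ext_id f n (a - n) x)) (ext_id f n (b - n) (\<phi> x)) \<in> qker H R b"
    using \<phi> unfolding bimap_def by blast+
  have \<psi>l: "lin_on (tpow b) (tpow c) \<psi>" and \<psi>q: "\<psi> ` qker H R b \<subseteq> qker H R c"
    and \<psi>h: "\<And>x h. x \<in> tpow b \<Longrightarrow> vsub (\<psi> (tact H b x h)) (tact H c (\<psi> x) h) \<in> qker H R c"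
    and \<psi>e: "\<And>f x. endo H R n f \<Longrightarrow> x \<in> tpow b \<Longrightarrow>
      vsub (\<psi> (ext_id f n (b - n) x)) (ext_id f n (c - n) (\<psi> x)) \<in> qker H R c"
    using \<psi> unfolding bimap_def by blast+
  have "lin_on (tpow a) (tpow c) (\<lambda>x. \<psi> (\<phi> x))"
    by (rule lin_on_comp[OF \<phi>l \<psi>l])
  moreover have "(\<lambda>x. \<psi> (\<phi> x)) ` qker H R a \<subseteq> qker H R c"
    using \<phi>q \<psi>q by blast
  moreover have "vsub (\<psi> (\<phi> (tact H a x h))) (tact H c (\<psi> (\<phi> x)) h) \<in> qker H R c"
    if "x \<in> tpow a" for x h
    using lin_qker_cong_trans[OF \<psi>l \<psi>q lin_in[OF \<phi>l tact_tpow] tact_tpow \<phi>h[OF that]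
        \<psi>h[OF lin_in[OF \<phi>l that]]] .
  moreover have "vsub (\<psi> (\<phi> (ext_id f n (a - n) x))) (ext_id f n (c - n) (\<psi> (\<phi> x))) \<in> qker H R c"
    if "endo H R n f" "x \<in> tpow a" for f x
  proof -
    have u: "ext_id f n (a - n) x \<in> tpow a" and w: "ext_id f n (b - n) (\<phi> x) \<in> tpow b"
      using ext_id_tpow[of f n "a - n" x] ext_id_tpow[of f n "b - n" "\<phi> x"] \<open>n \<le> a\<close> \<open>n \<le> b\<close>
      by simp_all
    show ?thesis
      using lin_qker_cong_trans[OF \<psi>l \<psi>q lin_in[OF \<phi>l u] w \<phi>e[OF that]
          \<psi>e[OF that(1) lin_in[OF \<phi>l that(2)]]] .
  qed
  ultimately show ?thesis
    unfolding bimap_def by blast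
qed

lemma vsub_self [simp]: "vsub x x = (\<lambda>_. 0)"
  by (simp add: vsub_def)

lemma bimap_id: "bimap H R n a a (\<lambda>x. x)"
  unfolding bimap_def lin_on_def by (auto simp: subspace_zero[OF qker_subspace])

lemma bimod_summand_refl: "bimod_summand H R n a a"
  unfolding bimod_summand_def
  by (intro exI[of _ "\<lambda>x. x"] conjI bimap_id) (simp add: subspace_zero[OF qker_subspace])

lemma bimod_summand_trans:
  fixes H :: "('k::field, 'b::finite) hopf"
  assumes ab: "bimod_summand H R n a b" and bc: "bimod_summand H R n b c"
    and "n \<le> a" "n \<le> b" "n \<le> c"
  shows "bimod_summand H R n a c"
proof -
  obtain i1 p1 where 1: "bimap H R n a b i1" "bimap H R n b a p1"
    "\<And>x. x \<in> tpow a \<Longrightarrow> vsub (p1 (i1 x)) x \<in> qker H R a"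
    using ab unfolding bimod_summand_def by blast
  obtain i2 p2 where 2: "bimap H R n b c i2" "bimap H R n c b p2"
    "\<And>x. x \<in> tpow b \<Longrightarrow> vsub (p2 (i2 x)) x \<in> qker H R b"
    using bc unfolding bimod_summand_def by blast
  have i1: "lin_on (tpow a) (tpow b) i1" and i2: "lin_on (tpow b) (tpow c) i2"
    and p2: "lin_on (tpow c) (tpow b) p2"
    using 1(1) 2(1,2) unfolding bimap_def by simp_all
  have p1: "lin_on (tpow b) (tpow a) p1" "p1 ` qker H R b \<subseteq> qker H R a"
    using 1(2) unfolding bimap_def by simp_all
  have "vsub (p1 (p2 (i2 (i1 x)))) x \<in> qker H R a" if "x \<in> tpow a" for x
    using lin_qker_cong_trans[OF p1 lin_in[OF p2 lin_in[OF i2 lin_in[OF i1 that]]] lin_in[OF i1 that]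
        2(3)[OF lin_in[OF i1 that]] 1(3)[OF that]] .
  moreover have "bimap H R n a c (\<lambda>x. i2 (i1 x))" "bimap H R n c a (\<lambda>x. p1 (p2 x))"
    using bimap_comp[OF 1(1) 2(1)] bimap_comp[OF 2(2) 1(2)] assms(3-5) by simp_all
  ultimately show ?thesis
    unfolding bimod_summand_def by blast
qed

lemma bimod_summand_chain:
  fixes H :: "('k::field, 'b::finite) hopf"
  assumes step: "\<And>k. a \<le> k \<Longrightarrow> bimod_summand H R n k (Suc k)" and "n \<le> a"
  shows "bimod_summand H R n a (a + m)"
proof (induction m)
  case 0
  show ?case by (simp add: bimod_summand_refl)
next
  case (Suc m)
  show ?case
    using bimod_summand_trans[OF Suc.IH step[of "a + m"]] \<open>n \<le> a\<close> by simp
qed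

section \<open>Maps acting on the last tensor factors\<close>

lemma tens_tpow: "tens hs \<in> tpow (length hs)"
  by (simp add: tens_def tpow_def)

text \<open>tail_map j p q K is id^(x)j (x) \<kappa> : H^(x)(j+p) \<rightarrow> H^(x)(j+q), where \<kappa> : H^(x)p \<rightarrow> H^(x)q
  has matrix K: K s u is the coefficient of e_s in \<kappa>(e_u).\<close>

definition tail_map :: "nat \<Rightarrow> nat \<Rightarrow> nat \<Rightarrow> ('b list \<Rightarrow> 'b list \<Rightarrow> 'k::field)
    \<Rightarrow> ('b list \<Rightarrow> 'k) \<Rightarrow> 'b list \<Rightarrow> 'k" where
  "tail_map j p q K y = (\<lambda>v. if length v = j + q then (\<Sum>u\<in>words p. K (drop j v) u * y (take j v @ u)) else 0)"

lemma tail_map_append: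
  "length w = j \<Longrightarrow> length s = q \<Longrightarrow> tail_map j p q K y (w @ s) = (\<Sum>u\<in>words p. K s u * y (w @ u))"
  by (simp add: tail_map_def)

lemma tail_map_tpow: "tail_map j p q K y \<in> tpow (j + q)"
  by (simp add: tail_map_def tpow_def)

lemma tail_map_lin: "lin_on UNIV UNIV (tail_map j p q K)"
  unfolding lin_on_def tail_map_def vadd_def vscale_def
  by (auto simp: fun_eq_iff algebra_simps sum.distrib sum_distrib_left)

lemma tail_map_lin_tpow: "lin_on (tpow (j + p)) (tpow (j + q)) (tail_map j p q K)"
  using tail_map_lin[of j p q K] tail_map_tpow[of j p q K] unfolding lin_on_def by blast

lemma tail_map_tprod:
  fixes K :: "'b list \<Rightarrow> 'b list \<Rightarrow> 'k::field"
  assumes A: "A \<in> tpow j"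
  shows "tail_map j p q K (tprod j A G) = tprod j A (tail_map 0 p q K G)"
proof
  fix v :: "'b list"
  show "tail_map j p q K (tprod j A G) v = tprod j A (tail_map 0 p q K G) v"
  proof (cases "length v = j + q")
    case True
    then show ?thesis
      by (simp add: tail_map_def tprod_def sum_distrib_left mult_ac)
  next
    case False
    have "A (take j v) * tail_map 0 p q K G (drop j v) = 0"
      using A False by (cases "j \<le> length v") (auto simp: tpow_def tail_map_def)
    then show ?thesis
      using False by (simp add: tail_map_def tprod_def)
  qed
qed

lemma tail_map_qker:
  fixes K :: "'b::finite list \<Rightarrow> 'b list \<Rightarrow> 'k::field"
  assumes K: "\<And>gs i. length gs = p \<Longrightarrow> i < p \<Longrightarrow> gs ! i \<in> Rplus_H H R \<Longrightarrow>
      tail_map 0 p q K (tens gs) \<in> qker H R q"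
    and x: "x \<in> qker H R (j + p)"
  shows "tail_map j p q K x \<in> qker H R (j + q)"
proof (rule lin_vspan[OF tail_map_lin subspace_UNIV _ qker_subspace])
  show "x \<in> vspan {tens hs | hs. length hs = j + p \<and> (\<exists>i<j + p. hs ! i \<in> Rplus_H H R)}"
    using x unfolding qker_def .
next
  fix s assume "s \<in> {tens hs | hs. length hs = j + p \<and> (\<exists>i<j + p. hs ! i \<in> Rplus_H H R)}"
  then obtain hs i where s: "s = tens hs" and hs: "length hs = j + p" "i < j + p" "hs ! i \<in> Rplus_H H R"
    by blast
  have "tens hs = tprod j (tens (take j hs)) (tens (drop j hs))"
    using hs(1) by (simp add: tprod_tens)
  then have s_eq: "tail_map j p q K s = tprod j (tens (take j hs)) (tail_map 0 p q K (tens (drop j hs)))"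
    using tail_map_tprod[of "tens (take j hs)" j] tens_tpow[of "take j hs"] hs(1) s by simp
  show "tail_map j p q K s \<in> qker H R (j + q)"
  proof (cases "i < j")
    case True
    then have "tens (take j hs) \<in> qker H R j"
      using hs by (intro tens_in_qker[of _ _ i]) auto
    then show ?thesis
      unfolding s_eq using tail_map_tpow[of 0 p q K] by (intro qker_tprod_left) simp_all
  next
    case False
    then have "tail_map 0 p q K (tens (drop j hs)) \<in> qker H R q"
      using hs by (intro K[of _ "i - j"]) auto
    then show ?thesis
      unfolding s_eq using tens_tpow[of "take j hs"] hs(1) by (intro qker_tprod_right) simp_all
  qed
qed simp

lemma tail_map_ext_id:
  fixes K :: "'b::finite list \<Rightarrow> 'b list \<Rightarrow> 'k::field"
  assumes f: "lin_on (tpow n) (tpow n) f" and "n \<le> j"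
  shows "tail_map j p q K (ext_id f n (j + p - n) y) = ext_id f n (j + q - n) (tail_map j p q K y)"
proof
  fix v :: "'b list"
  show "tail_map j p q K (ext_id f n (j + p - n) y) v = ext_id f n (j + q - n) (tail_map j p q K y) v"
  proof (cases "length v = j + q")
    case False
    then show ?thesis using \<open>n \<le> j\<close> by (simp add: tail_map_def ext_id_def)
  next
    case True
    define Y where "Y u u' = y (u' @ drop n (take j v) @ u)" for u u'
    have ext: "ext_id f n (j + p - n) y (take j v @ u) = f (\<lambda>u'. if length u' = n then Y u u' else 0) (take n v)"
      if "u \<in> words p" for u
      using that True \<open>n \<le> j\<close> by (simp add: ext_id_def words_def Y_def cong: if_cong)
    have tail: "tail_map j p q K y (u' @ drop n v) = (\<Sum>u\<in>words p. K (drop j v) u * Y u u')"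
      if "length u' = n" for u'
      using that True \<open>n \<le> j\<close> by (simp add: tail_map_def Y_def take_drop)
    have "tail_map j p q K (ext_id f n (j + p - n) y) v
        = (\<Sum>u\<in>words p. K (drop j v) u * f (\<lambda>u'. if length u' = n then Y u u' else 0) (take n v))"
      using True by (simp add: tail_map_def ext)
    also have "\<dots> = f (\<lambda>u'. if length u' = n then (\<Sum>u\<in>words p. K (drop j v) u * Y u u') else 0) (take n v)"
      by (simp add: lin_tpow_sum[OF f finite_words])
    also have "\<dots> = ext_id f n (j + q - n) (tail_map j p q K y) v"
      using True \<open>n \<le> j\<close> by (simp add: ext_id_def tail cong: if_cong)
    finally show ?thesis .
  qed
qed

text \<open>Sweedler's formula x h = x h_(1) (x) h_(2) for x \<in> H^(x)j (x) H^(x)p, in coordinates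
  (tact_append): tact_split H j x h s b is the H^(x)j-component of x h that comes with e_s \<cdot> e_b
  on the last p factors.\<close>

definition tact_split :: "('k::field, 'b::finite) hopf \<Rightarrow> nat \<Rightarrow> ('b list \<Rightarrow> 'k) \<Rightarrow> ('b \<Rightarrow> 'k)
    \<Rightarrow> 'b list \<Rightarrow> 'b \<Rightarrow> 'b list \<Rightarrow> 'k" where
  "tact_split H j x h s b v0 =
     (\<Sum>c\<in>UNIV. h c * (\<Sum>w0\<in>words j. x (w0 @ s) * (\<Sum>a\<in>UNIV. hd H c a b * tact_coeff H j a w0 v0)))"

lemma tact_append:
  assumes H: "hopf_algebra H" and len: "length v0 = j" "length u = p"
  shows "tact H (j + p) x h (v0 @ u)
    = (\<Sum>s\<in>words p. \<Sum>b\<in>UNIV. tact_split H j x h s b v0 * tact_coeff H p b s u)"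
proof -
  define T where "T c w0 s b = (\<Sum>a\<in>UNIV. hd H c a b * tact_coeff H j a w0 v0) * tact_coeff H p b s u"
    for c w0 s b
  have split: "tact_coeff H (j + p) c (w0 @ s) (v0 @ u) = (\<Sum>b\<in>UNIV. T c w0 s b)"
    if "w0 \<in> words j" "s \<in> words p" for c w0 s
  proof -
    have "tact_coeff H (j + p) c (w0 @ s) (v0 @ u) = (\<Sum>a\<in>UNIV. \<Sum>b\<in>UNIV.
        hd H c a b * tact_coeff H j a w0 v0 * tact_coeff H p b s u)"
      using that len by (simp add: tact_coeff_append[OF H] words_def)
    also have "\<dots> = (\<Sum>b\<in>UNIV. \<Sum>a\<in>UNIV. hd H c a b * tact_coeff H j a w0 v0 * tact_coeff H p b s u)"
      by (rule sum.swap)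
    finally show ?thesis
      by (simp add: T_def sum_distrib_right)
  qed
  have "tact H (j + p) x h (v0 @ u)
      = (\<Sum>c\<in>UNIV. \<Sum>w0\<in>words j. \<Sum>s\<in>words p. \<Sum>b\<in>UNIV. h c * (x (w0 @ s) * T c w0 s b))"
    using len by (simp add: tact_eq_tact_coeff sum_words_append split sum_distrib_left)
  also have "\<dots> = (\<Sum>s\<in>words p. \<Sum>b\<in>UNIV. \<Sum>c\<in>UNIV. \<Sum>w0\<in>words j. h c * (x (w0 @ s) * T c w0 s b))"
    by (rule sum_swap_pairs)
  also have "\<dots> = (\<Sum>s\<in>words p. \<Sum>b\<in>UNIV. tact_split H j x h s b v0 * tact_coeff H p b s u)"
    unfolding tact_split_def T_def by (simp add: sum_distrib_left sum_distrib_right mult_ac)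
  finally show ?thesis .
qed

lemma tact_split_tail_map:
  assumes "length u = q"
  shows "tact_split H j (tail_map j p q K x) h u b v0
    = (\<Sum>s\<in>words p. K u s * tact_split H j x h s b v0)"
proof -
  define A where "A c w0 = (\<Sum>a\<in>UNIV. hd H c a b * tact_coeff H j a w0 v0)" for c w0
  have "tact_split H j (tail_map j p q K x) h u b v0
      = (\<Sum>c\<in>UNIV. \<Sum>w0\<in>words j. \<Sum>s\<in>words p. h c * (K u s * x (w0 @ s) * A c w0))"
    using assms unfolding tact_split_def A_def
    by (intro sum.cong refl) (simp add: tail_map_append words_def sum_distrib_left sum_distrib_right mult_ac)
  also have "\<dots> = (\<Sum>s\<in>words p. \<Sum>c\<in>UNIV. \<Sum>w0\<in>words j. h c * (K u s * x (w0 @ s) * A c w0))"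
    by (subst sum_rotate3, subst sum_rotate3) (rule refl)
  also have "\<dots> = (\<Sum>s\<in>words p. K u s * tact_split H j x h s b v0)"
    unfolding tact_split_def A_def by (simp add: sum_distrib_left mult_ac)
  finally show ?thesis .
qed

text \<open>\<kappa>(e_s' \<cdot> e_b) - \<kappa>(e_s') \<cdot> e_b in coordinates, for \<kappa> with matrix K as in tail_map.\<close>

definition hlin_defect :: "('k::field, 'b::finite) hopf \<Rightarrow> nat \<Rightarrow> nat \<Rightarrow> ('b list \<Rightarrow> 'b list \<Rightarrow> 'k)
    \<Rightarrow> 'b \<Rightarrow> 'b list \<Rightarrow> 'b list \<Rightarrow> 'k" where
  "hlin_defect H p q K b s' = (\<lambda>s. if length s = q then
     (\<Sum>u\<in>words p. K s u * tact_coeff H p b s' u) - (\<Sum>u\<in>words q. K u s' * tact_coeff H q b u s) else 0)"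

lemma tail_map_tact_eq:
  fixes K :: "'b::finite list \<Rightarrow> 'b list \<Rightarrow> 'k::field"
  assumes H: "hopf_algebra H" and len: "length v0 = j" "length s = q"
  shows "tail_map j p q K (tact H (j + p) x h) (v0 @ s) - tact H (j + q) (tail_map j p q K x) h (v0 @ s)
    = (\<Sum>s'\<in>words p. \<Sum>b\<in>UNIV. tact_split H j x h s' b v0 *
        ((\<Sum>u\<in>words p. K s u * tact_coeff H p b s' u) - (\<Sum>u\<in>words q. K u s' * tact_coeff H q b u s)))"
proof -
  have "tail_map j p q K (tact H (j + p) x h) (v0 @ s) = (\<Sum>u\<in>words p. K s u * tact H (j + p) x h (v0 @ u))"
    using len by (simp add: tail_map_append)
  also have "\<dots> = (\<Sum>u\<in>words p. \<Sum>s'\<in>words p. \<Sum>b\<in>UNIV. K s u * (tact_split H j x h s' b v0 * tact_coeff H p b s' u))"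
    by (intro sum.cong refl) (simp add: tact_append[OF H len(1)] words_def sum_distrib_left)
  also have "\<dots> = (\<Sum>s'\<in>words p. \<Sum>b\<in>UNIV. tact_split H j x h s' b v0 * (\<Sum>u\<in>words p. K s u * tact_coeff H p b s' u))"
    by (subst sum_rotate3) (simp add: sum_distrib_left mult_ac)
  finally have L: "tail_map j p q K (tact H (j + p) x h) (v0 @ s) = \<dots>" .
  have "tact H (j + q) (tail_map j p q K x) h (v0 @ s)
      = (\<Sum>u\<in>words q. \<Sum>b\<in>UNIV. tact_split H j (tail_map j p q K x) h u b v0 * tact_coeff H q b u s)"
    by (rule tact_append[OF H len])
  also have "\<dots> = (\<Sum>u\<in>words q. \<Sum>b\<in>UNIV. \<Sum>s'\<in>words p. K u s' * tact_split H j x h s' b v0 * tact_coeff H q b u s)"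
    by (intro sum.cong refl) (simp add: tact_split_tail_map words_def sum_distrib_right)
  also have "\<dots> = (\<Sum>s'\<in>words p. \<Sum>b\<in>UNIV. tact_split H j x h s' b v0 * (\<Sum>u\<in>words q. K u s' * tact_coeff H q b u s))"
    by (subst sum_rotate3, subst sum.swap) (simp add: sum_distrib_left mult_ac)
  finally have R: "tact H (j + q) (tail_map j p q K x) h (v0 @ s) = \<dots>" .
  show ?thesis
    unfolding L R by (simp add: sum_subtractf right_diff_distrib)
qed

lemma tail_map_tact:
  fixes K :: "'b::finite list \<Rightarrow> 'b list \<Rightarrow> 'k::field"
  assumes H: "hopf_algebra H"
    and K: "\<And>b s'. s' \<in> words p \<Longrightarrow> hlin_defect H p q K b s' \<in> qker H R q"
  shows "vsub (tail_map j p q K (tact H (j + p) x h)) (tact H (j + q) (tail_map j p q K x) h)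
    \<in> qker H R (j + q)"
proof -
  define C where "C s' b = (\<lambda>v0. if length v0 = j then tact_split H j x h s' b v0 else 0)" for s' b
  have "vsub (tail_map j p q K (tact H (j + p) x h)) (tact H (j + q) (tail_map j p q K x) h)
      = (\<lambda>v. \<Sum>s'\<in>words p. \<Sum>b\<in>UNIV. tprod j (C s' b) (hlin_defect H p q K b s') v)"
  proof
    fix v :: "'b list"
    show "vsub (tail_map j p q K (tact H (j + p) x h)) (tact H (j + q) (tail_map j p q K x) h) v
        = (\<Sum>s'\<in>words p. \<Sum>b\<in>UNIV. tprod j (C s' b) (hlin_defect H p q K b s') v)"
    proof (cases "length v = j + q")
      case True
      then have "v = take j v @ drop j v" "length (take j v) = j" "length (drop j v) = q"
        by simp_all
      then show ?thesis
        using tail_map_tact_eq[OF H, of "take j v" j "drop j v" q p K x h]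
        by (simp add: vsub_def tprod_def C_def hlin_defect_def)
    next
      case False
      then have "tprod j (C s' b) (hlin_defect H p q K b s') v = 0" for s' b
        by (auto simp: tprod_def C_def hlin_defect_def)
      then show ?thesis
        using False by (simp add: vsub_def tail_map_def tact_def)
    qed
  qed
  also have "\<dots> \<in> qker H R (j + q)"
  proof (intro subspace_sum[OF qker_subspace] finite_words finite_UNIV)
    fix s' :: "'b list" and b :: 'b assume "s' \<in> words p"
    then show "tprod j (C s' b) (hlin_defect H p q K b s') \<in> qker H R (j + q)"
      using K by (intro qker_tprod_right) (auto simp: C_def tpow_def)
  qed
  finally show ?thesis .
qed

lemma bimap_tail_map:
  fixes K :: "'b::finite list \<Rightarrow> 'b list \<Rightarrow> 'k::field"
  assumes H: "hopf_algebra H" and "n \<le> j"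
    and qker: "\<And>gs i. length gs = p \<Longrightarrow> i < p \<Longrightarrow> gs ! i \<in> Rplus_H H R \<Longrightarrow>
      tail_map 0 p q K (tens gs) \<in> qker H R q"
    and equivariant: "\<And>b s'. s' \<in> words p \<Longrightarrow> hlin_defect H p q K b s' \<in> qker H R q"
  shows "bimap H R n (j + p) (j + q) (tail_map j p q K)"
proof -
  have "vsub (tail_map j p q K (ext_id f n (j + p - n) x)) (ext_id f n (j + q - n) (tail_map j p q K x))
      \<in> qker H R (j + q)" if "endo H R n f" for f x
    using that \<open>n \<le> j\<close> by (simp add: endo_def tail_map_ext_id subspace_zero[OF qker_subspace])
  then show ?thesis
    unfolding bimap_def
    using tail_map_lin_tpow tail_map_qker[OF qker] tail_map_tact[OF H equivariant] by auto
qed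

section \<open>The comultiplication of R^+ H\<close>

lemma heps_Rplus_H:
  assumes H: "hopf_algebra H" and "k \<in> Rplus_H H R"
  shows "heps H k = 0"
proof -
  have sub: "subspace_of {x. heps H x = 0}"
    unfolding subspace_of_def heps_def vadd_def vscale_def
    by (simp add: distrib_right sum.distrib mult.assoc flip: sum_distrib_left)
  have "heps H (hmul H r h) = heps H r * heps H h" for r h
  proof -
    have "heps H (hmul H r h) = (\<Sum>a\<in>UNIV. \<Sum>b\<in>UNIV. r a * h b * (\<Sum>c\<in>UNIV. hm H a b c * he H c))"
      unfolding heps_def hmul_def
      by (simp add: sum_distrib_left sum_distrib_right mult.assoc, subst sum.swap,
          rule sum.cong[OF refl], subst sum.swap, simp)
    then show ?thesis
      unfolding hopf_counit_mult[OF H] heps_def by (simp add: sum_distrib_left sum_distrib_right mult_ac)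
  qed
  then have "k \<in> {x. heps H x = 0}"
    using assms(2) unfolding Rplus_H_def by (intro vspan_minimal[OF _ sub]) auto
  then show ?thesis by simp
qed

definition Rplus_tensor :: "('k::field, 'b::finite) hopf \<Rightarrow> ('b \<Rightarrow> 'k) set \<Rightarrow> ('b \<times> 'b \<Rightarrow> 'k) set" where
  "Rplus_tensor H R = vspan {tensor2 X Y | X Y. X \<in> R \<and> Y \<in> R \<and> (heps H X = 0 \<or> heps H Y = 0)}"

definition Rplus_H_tensor :: "('k::field, 'b::finite) hopf \<Rightarrow> ('b \<Rightarrow> 'k) set \<Rightarrow> ('b \<times> 'b \<Rightarrow> 'k) set" where
  "Rplus_H_tensor H R = vspan {tensor2 X Y | X Y. X \<in> Rplus_H H R \<or> Y \<in> Rplus_H H R}"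

text \<open>D \<Delta>(h) in H (x) H.\<close>

definition mul_comul :: "('k::field, 'b::finite) hopf \<Rightarrow> ('b \<Rightarrow> 'k) \<Rightarrow> ('b \<times> 'b \<Rightarrow> 'k) \<Rightarrow> ('b \<times> 'b \<Rightarrow> 'k)" where
  "mul_comul H h D = (\<lambda>(i, j). \<Sum>p\<in>UNIV. \<Sum>q\<in>UNIV. D (p, q) *
     (\<Sum>b\<in>UNIV. h b * (\<Sum>r\<in>UNIV. \<Sum>s\<in>UNIV. hd H b r s * hm H p r i * hm H q s j)))"

lemma comul_hmul:
  assumes H: "hopf_algebra H"
  shows "hcomul H (hmul H x h) = mul_comul H h (hcomul H x)"
proof (rule ext, clarify)
  fix i j
  define W where "W b p q = (\<Sum>r\<in>UNIV. \<Sum>s\<in>UNIV. hd H b r s * hm H p r i * hm H q s j)" for b p q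
  have "hcomul H (hmul H x h) (i, j) = (\<Sum>a\<in>UNIV. \<Sum>b\<in>UNIV. x a * h b * (\<Sum>c\<in>UNIV. hm H a b c * hd H c i j))"
    unfolding hcomul_def hmul_def
    by (simp add: sum_distrib_left sum_distrib_right mult.assoc, subst sum.swap,
        rule sum.cong[OF refl], subst sum.swap, simp)
  also have "\<dots> = (\<Sum>a\<in>UNIV. \<Sum>b\<in>UNIV. \<Sum>p\<in>UNIV. \<Sum>q\<in>UNIV. x a * h b * (hd H a p q * W b p q))"
    unfolding hopf_comul_mult[OF H] W_def by (simp add: sum_distrib_left mult.assoc)
  also have "\<dots> = (\<Sum>p\<in>UNIV. \<Sum>q\<in>UNIV. \<Sum>a\<in>UNIV. \<Sum>b\<in>UNIV. x a * h b * (hd H a p q * W b p q))"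
    by (rule sum_swap_pairs)
  also have "\<dots> = (\<Sum>p\<in>UNIV. \<Sum>q\<in>UNIV. (\<Sum>a\<in>UNIV. x a * hd H a p q) * (\<Sum>b\<in>UNIV. h b * W b p q))"
    unfolding sum_product by (simp add: mult_ac)
  also have "\<dots> = mul_comul H h (hcomul H x) (i, j)"
    by (simp add: mul_comul_def hcomul_def W_def)
  finally show "hcomul H (hmul H x h) (i, j) = mul_comul H h (hcomul H x) (i, j)" .
qed

lemma hmul_basis: "hmul H X (kd r) = (\<lambda>i. \<Sum>p\<in>UNIV. X p * hm H p r i)"
  unfolding hmul_def by (simp add: kd_def if_distrib if_distribR cong: if_cong)

lemma mul_comul_tensor2:
  "mul_comul H h (tensor2 X Y)
    = (\<lambda>z. \<Sum>r\<in>UNIV. \<Sum>s\<in>UNIV. hcomul H h (r, s) * tensor2 (hmul H X (kd r)) (hmul H Y (kd s)) z)"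
proof (rule ext, clarify)
  fix i j
  have inner: "(\<Sum>b\<in>UNIV. h b * (\<Sum>r\<in>UNIV. \<Sum>s\<in>UNIV. hd H b r s * hm H p r i * hm H q s j))
      = (\<Sum>r\<in>UNIV. \<Sum>s\<in>UNIV. hcomul H h (r, s) * (hm H p r i * hm H q s j))" for p q
  proof -
    have "(\<Sum>b\<in>UNIV. h b * (\<Sum>r\<in>UNIV. \<Sum>s\<in>UNIV. hd H b r s * hm H p r i * hm H q s j))
        = (\<Sum>b\<in>UNIV. \<Sum>r\<in>UNIV. \<Sum>s\<in>UNIV. h b * hd H b r s * (hm H p r i * hm H q s j))"
      by (simp add: sum_distrib_left mult_ac)
    also have "\<dots> = (\<Sum>r\<in>UNIV. \<Sum>s\<in>UNIV. \<Sum>b\<in>UNIV. h b * hd H b r s * (hm H p r i * hm H q s j))"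
      by (rule sum_rotate3)
    finally show ?thesis
      by (simp add: hcomul_def sum_distrib_right)
  qed
  have "mul_comul H h (tensor2 X Y) (i, j) = (\<Sum>p\<in>UNIV. \<Sum>q\<in>UNIV. X p * Y q *
      (\<Sum>b\<in>UNIV. h b * (\<Sum>r\<in>UNIV. \<Sum>s\<in>UNIV. hd H b r s * hm H p r i * hm H q s j)))"
    by (simp add: mul_comul_def tensor2_def)
  also have "\<dots> = (\<Sum>p\<in>UNIV. \<Sum>q\<in>UNIV. \<Sum>r\<in>UNIV. \<Sum>s\<in>UNIV.
      hcomul H h (r, s) * (X p * hm H p r i * (Y q * hm H q s j)))"
    unfolding inner by (simp add: sum_distrib_left mult_ac)
  also have "\<dots> = (\<Sum>r\<in>UNIV. \<Sum>s\<in>UNIV. \<Sum>p\<in>UNIV. \<Sum>q\<in>UNIV. hcomul H h (r, s) * (X p * hm H p r i * (Y q * hm H q s j)))"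
    by (rule sum_swap_pairs)
  also have "\<dots> = (\<Sum>r\<in>UNIV. \<Sum>s\<in>UNIV.
      hcomul H h (r, s) * ((\<Sum>p\<in>UNIV. X p * hm H p r i) * (\<Sum>q\<in>UNIV. Y q * hm H q s j)))"
    unfolding sum_product by (simp add: sum_distrib_left)
  also have "\<dots> = (\<Sum>r\<in>UNIV. \<Sum>s\<in>UNIV. hcomul H h (r, s) * tensor2 (hmul H X (kd r)) (hmul H Y (kd s)) (i, j))"
    by (simp add: tensor2_def hmul_basis)
  finally show "mul_comul H h (tensor2 X Y) (i, j)
    = (\<Sum>r\<in>UNIV. \<Sum>s\<in>UNIV. hcomul H h (r, s) * tensor2 (hmul H X (kd r)) (hmul H Y (kd s)) (i, j))" .
qed

lemma Rplus_tensor_subspace: "subspace_of (Rplus_tensor H R)"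
  unfolding Rplus_tensor_def by (rule vspan_subspace)

lemma Rplus_H_tensor_subspace: "subspace_of (Rplus_H_tensor H R)"
  unfolding Rplus_H_tensor_def by (rule vspan_subspace)

lemma mul_comul_Rplus_tensor:
  assumes "D \<in> Rplus_tensor H R"
  shows "mul_comul H h D \<in> Rplus_H_tensor H R"
proof (rule lin_vspan[where f="mul_comul H h", OF _ subspace_UNIV _ Rplus_H_tensor_subspace])
  show "lin_on UNIV UNIV (mul_comul H h)"
    unfolding lin_on_def mul_comul_def vadd_def vscale_def
    by (auto simp: fun_eq_iff algebra_simps sum.distrib sum_distrib_left)
  show "D \<in> vspan {tensor2 X Y | X Y. X \<in> R \<and> Y \<in> R \<and> (heps H X = 0 \<or> heps H Y = 0)}"
    using assms unfolding Rplus_tensor_def .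
next
  fix D assume "D \<in> {tensor2 X Y | X Y. X \<in> R \<and> Y \<in> R \<and> (heps H X = 0 \<or> heps H Y = 0)}"
  then obtain X Y where D: "D = tensor2 X Y" "X \<in> R" "Y \<in> R" "heps H X = 0 \<or> heps H Y = 0"
    by blast
  have "hmul H Z h' \<in> Rplus_H H R" if "Z \<in> R" "heps H Z = 0" for Z h'
    unfolding Rplus_H_def using that by (intro vspan_superset) blast
  then have "tensor2 (hmul H X (kd r)) (hmul H Y (kd s)) \<in> Rplus_H_tensor H R" for r s
    unfolding Rplus_H_tensor_def using D by (intro vspan_superset) blast
  then show "mul_comul H h D \<in> Rplus_H_tensor H R"
    unfolding D(1) mul_comul_tensor2
    by (intro subspace_sum[OF Rplus_H_tensor_subspace finite_UNIV]
        subspace_sum_scale[OF Rplus_H_tensor_subspace finite_UNIV])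
qed simp

definition aug_proj :: "('k::field, 'b::finite) hopf \<Rightarrow> ('b \<times> 'b \<Rightarrow> 'k) \<Rightarrow> ('b \<times> 'b \<Rightarrow> 'k)" where
  "aug_proj H D = (\<lambda>(p, q). D (p, q) - (\<Sum>p'\<in>UNIV. \<Sum>q'\<in>UNIV. D (p', q') * he H p' * he H q') * (hu H p * hu H q))"

lemma aug_proj_tensor2:
  assumes H: "hopf_algebra H" and R: "hopf_subalgebra H R" and "X \<in> R" "Y \<in> R"
  shows "aug_proj H (tensor2 X Y) \<in> Rplus_tensor H R"
proof -
  have RS: "subspace_of R" and hu: "hu H \<in> R"
    using R unfolding hopf_subalgebra_def hunit_def by auto
  define X' where "X' = (\<lambda>a. X a - heps H X * hu H a)"
  define Y' where "Y' = (\<lambda>a. Y a - heps H Y * hu H a)"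
  have "X' \<in> R" "Y' \<in> R"
    using subspace_vsub[OF RS assms(3) subspace_scale[OF RS hu, of "heps H X"]]
      subspace_vsub[OF RS assms(4) subspace_scale[OF RS hu, of "heps H Y"]]
    by (simp_all add: X'_def Y'_def vsub_def)
  have heps_shift: "heps H (\<lambda>a. Z a - c * hu H a) = heps H Z - c" for Z c
    using hopf_counit_unit[OF H] unfolding heps_def
    by (simp add: left_diff_distrib sum_subtractf mult.assoc flip: sum_distrib_left)
  have gen: "tensor2 Z W \<in> Rplus_tensor H R" if "Z \<in> R" "W \<in> R" "heps H Z = 0 \<or> heps H W = 0" for Z W
    unfolding Rplus_tensor_def using that by (intro vspan_superset) blast
  have "(\<Sum>p'\<in>UNIV. \<Sum>q'\<in>UNIV. tensor2 X Y (p', q') * he H p' * he H q') = heps H X * heps H Y"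
    unfolding tensor2_def heps_def sum_product by (simp add: mult_ac)
  then have "aug_proj H (tensor2 X Y) = (\<lambda>z. tensor2 X' Y z + heps H X * tensor2 (hu H) Y' z)"
    unfolding aug_proj_def by (auto simp: fun_eq_iff tensor2_def X'_def Y'_def algebra_simps)
  also have "\<dots> \<in> Rplus_tensor H R"
    using \<open>X' \<in> R\<close> \<open>Y' \<in> R\<close> assms(4) hu
    by (intro subspace_add[OF Rplus_tensor_subspace] subspace_scale[OF Rplus_tensor_subspace] gen)
       (simp_all add: X'_def Y'_def heps_shift)
  finally show ?thesis .
qed

lemma comul_counit_counit:
  assumes H: "hopf_algebra H"
  shows "(\<Sum>p\<in>UNIV. \<Sum>q\<in>UNIV. hcomul H x (p, q) * he H p * he H q) = heps H x"
proof -
  have "(\<Sum>p\<in>UNIV. \<Sum>q\<in>UNIV. hcomul H x (p, q) * he H p * he H q)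
      = (\<Sum>p\<in>UNIV. \<Sum>q\<in>UNIV. \<Sum>a\<in>UNIV. x a * he H p * (hd H a p q * he H q))"
    by (simp add: hcomul_def sum_distrib_left sum_distrib_right mult_ac)
  also have "\<dots> = (\<Sum>a\<in>UNIV. \<Sum>p\<in>UNIV. \<Sum>q\<in>UNIV. x a * he H p * (hd H a p q * he H q))"
    by (rule sum_rotate3[symmetric])
  also have "\<dots> = (\<Sum>a\<in>UNIV. \<Sum>p\<in>UNIV. x a * he H p * kd a p)"
    by (simp add: hopf_counit_right[OF H] flip: sum_distrib_left)
  also have "\<dots> = (\<Sum>a\<in>UNIV. x a * (\<Sum>p\<in>UNIV. kd a p * he H p))"
    by (simp add: sum_distrib_left mult_ac)
  finally show ?thesis
    by (simp add: heps_def)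
qed

lemma comul_Rplus_H:
  assumes H: "hopf_algebra H" and R: "hopf_subalgebra H R" and k: "k \<in> Rplus_H H R"
  shows "hcomul H k \<in> Rplus_H_tensor H R"
proof (rule lin_vspan[where f="hcomul H", OF _ subspace_UNIV _ Rplus_H_tensor_subspace])
  show "lin_on UNIV UNIV (hcomul H)"
    unfolding lin_on_def hcomul_def vadd_def vscale_def
    by (auto simp: fun_eq_iff algebra_simps sum.distrib sum_distrib_left)
  show "k \<in> vspan {hmul H r h | r h. r \<in> R \<and> heps H r = 0}"
    using k unfolding Rplus_H_def .
next
  fix g assume "g \<in> {hmul H r h | r h. r \<in> R \<and> heps H r = 0}"
  then obtain r h where g: "g = hmul H r h" and r: "r \<in> R" "heps H r = 0"
    by blast
  have span: "hcomul H r \<in> vspan {tensor2 r s | r s. r \<in> R \<and> s \<in> R}"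
    using R r unfolding hopf_subalgebra_def by blast
  have lin: "lin_on UNIV UNIV (aug_proj H)"
    unfolding lin_on_def aug_proj_def vadd_def vscale_def
    by (auto simp: fun_eq_iff algebra_simps sum.distrib sum_distrib_left)
  have gen: "aug_proj H D \<in> Rplus_tensor H R" if "D \<in> {tensor2 r s | r s. r \<in> R \<and> s \<in> R}" for D
    using that aug_proj_tensor2[OF H R] by blast
  have "aug_proj H (hcomul H r) \<in> Rplus_tensor H R"
    by (rule lin_vspan[OF lin subspace_UNIV subset_UNIV Rplus_tensor_subspace gen span])
  moreover have "aug_proj H (hcomul H r) = hcomul H r"
    unfolding aug_proj_def comul_counit_counit[OF H] r(2) by (simp add: fun_eq_iff)
  ultimately show "hcomul H g \<in> Rplus_H_tensor H R"
    unfolding g comul_hmul[OF H] by (simp add: mul_comul_Rplus_tensor)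
qed simp

lemma Rplus_H_tensor_qker:
  assumes "G \<in> Rplus_H_tensor H R"
  shows "(\<lambda>s. if length s = 2 then G (s ! 0, s ! 1) else 0) \<in> qker H R 2"
proof (rule lin_vspan[where f="\<lambda>G s. if length s = 2 then G (s ! 0, s ! 1) else 0",
      OF _ subspace_UNIV _ qker_subspace])
  show "lin_on UNIV UNIV (\<lambda>G s. if length s = 2 then G (s ! 0, s ! 1) else 0)"
    by (auto simp: lin_on_def vadd_def vscale_def fun_eq_iff)
  show "G \<in> vspan {tensor2 X Y | X Y. X \<in> Rplus_H H R \<or> Y \<in> Rplus_H H R}"
    using assms unfolding Rplus_H_tensor_def .
next
  fix G assume "G \<in> {tensor2 X Y | X Y. X \<in> Rplus_H H R \<or> Y \<in> Rplus_H H R}"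
  then obtain X Y where G: "G = tensor2 X Y" and XY: "X \<in> Rplus_H H R \<or> Y \<in> Rplus_H H R"
    by blast
  have "(\<lambda>s. if length s = 2 then G (s ! 0, s ! 1) else 0) = tens [X, Y]"
    by (auto simp: G tensor2_def tens_def fun_eq_iff lessThan_Suc numeral_2_eq_2)
  also have "\<dots> \<in> qker H R 2"
    using XY by (auto intro: tens_in_qker[of _ _ 0] tens_in_qker[of _ _ 1])
  finally show "(\<lambda>s. if length s = 2 then G (s ! 0, s ! 1) else 0) \<in> qker H R 2" .
qed simp

section \<open>The splittings\<close>

definition comul_last :: "('k::field, 'b::finite) hopf \<Rightarrow> nat \<Rightarrow> ('b list \<Rightarrow> 'k) \<Rightarrow> 'b list \<Rightarrow> 'k" where
  "comul_last H j = tail_map j 1 2 (\<lambda>s u. hd H (u ! 0) (s ! 0) (s ! 1))"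

definition counit_last :: "('k::field, 'b::finite) hopf \<Rightarrow> nat \<Rightarrow> ('b list \<Rightarrow> 'k) \<Rightarrow> 'b list \<Rightarrow> 'k" where
  "counit_last H j = tail_map j 1 0 (\<lambda>s u. he H (u ! 0))"

definition tensor_right :: "nat \<Rightarrow> ('b \<Rightarrow> 'k::field) \<Rightarrow> ('b list \<Rightarrow> 'k) \<Rightarrow> 'b list \<Rightarrow> 'k" where
  "tensor_right j t = tail_map j 0 1 (\<lambda>s u. t (s ! 0))"

lemma length_2_cases: "length s = 2 \<Longrightarrow> (\<And>d e. s = [d, e] \<Longrightarrow> P) \<Longrightarrow> P"
  by (cases s; cases "tl s") (auto simp: numeral_2_eq_2)

lemma bimap_comul_last:
  fixes H :: "('k::field, 'b::finite) hopf"
  assumes H: "hopf_algebra H" and R: "hopf_subalgebra H R" and "n \<le> j"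
  shows "bimap H R n (j + 1) (j + 2) (comul_last H j)"
  unfolding comul_last_def
proof (rule bimap_tail_map[OF H \<open>n \<le> j\<close>])
  fix gs :: "('b \<Rightarrow> 'k) list" and i
  assume "length gs = 1" "i < 1" "gs ! i \<in> Rplus_H H R"
  then obtain g where gs: "gs = [g]" and g: "g \<in> Rplus_H H R"
    by (cases gs) auto
  have "tail_map 0 1 2 (\<lambda>s u. hd H (u ! 0) (s ! 0) (s ! 1)) (tens gs)
      = (\<lambda>s. if length s = 2 then hcomul H g (s ! 0, s ! 1) else 0)"
    by (auto simp: fun_eq_iff tail_map_def sum_words_1 gs tens_def hcomul_def mult.commute)
  also have "\<dots> \<in> qker H R 2"
    by (rule Rplus_H_tensor_qker[OF comul_Rplus_H[OF H R g]])
  finally show "tail_map 0 1 2 (\<lambda>s u. hd H (u ! 0) (s ! 0) (s ! 1)) (tens gs) \<in> qker H R 2" .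
next
  fix b and s' :: "'b list"
  assume "s' \<in> words 1"
  then obtain e where s': "s' = [e]"
    by (cases s') (auto simp: words_def)
  have "(\<Sum>u\<in>words 1. hd H (u ! 0) d0 d1 * tact_coeff H 1 b s' u)
      = (\<Sum>u\<in>words 2. hd H (s' ! 0) (u ! 0) (u ! 1) * tact_coeff H 2 b u [d0, d1])" for d0 d1
    using hopf_comul_mult[OF H, of e b d0 d1]
    by (simp add: s' sum_words_1 sum_words_2 tact_coeff_single[OF H] tact_coeff_pair[OF H]
        numeral_2_eq_2 sum_distrib_left mult_ac)
  then have "hlin_defect H 1 2 (\<lambda>s u. hd H (u ! 0) (s ! 0) (s ! 1)) b s' = (\<lambda>_. 0)"
    by (auto simp: hlin_defect_def fun_eq_iff elim!: length_2_cases)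
  then show "hlin_defect H 1 2 (\<lambda>s u. hd H (u ! 0) (s ! 0) (s ! 1)) b s' \<in> qker H R 2"
    by (simp add: subspace_zero[OF qker_subspace])
qed

lemma bimap_counit_last:
  fixes H :: "('k::field, 'b::finite) hopf"
  assumes H: "hopf_algebra H" and "n \<le> j"
  shows "bimap H R n (j + 1) (j + 0) (counit_last H j)"
  unfolding counit_last_def
proof (rule bimap_tail_map[OF H \<open>n \<le> j\<close>])
  fix gs :: "('b \<Rightarrow> 'k) list" and i
  assume "length gs = 1" "i < 1" "gs ! i \<in> Rplus_H H R"
  then obtain g where gs: "gs = [g]" and g: "g \<in> Rplus_H H R"
    by (cases gs) auto
  have "tail_map 0 1 0 (\<lambda>s u. he H (u ! 0)) (tens gs) = (\<lambda>_. 0)"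
    using heps_Rplus_H[OF H g]
    by (auto simp: fun_eq_iff tail_map_def sum_words_1 gs tens_def heps_def mult.commute)
  then show "tail_map 0 1 0 (\<lambda>s u. he H (u ! 0)) (tens gs) \<in> qker H R 0"
    by (simp add: subspace_zero[OF qker_subspace])
next
  fix b and s' :: "'b list"
  assume "s' \<in> words 1"
  then obtain e where s': "s' = [e]"
    by (cases s') (auto simp: words_def)
  have "(\<Sum>u\<in>words 1. he H (u ! 0) * tact_coeff H 1 b s' u)
      = (\<Sum>u\<in>words 0. he H (s' ! 0) * tact_coeff H 0 b u [])"
    using hopf_counit_mult[OF H, of e b]
    by (simp add: s' sum_words_1 words_0 tact_coeff_single[OF H] tact_coeff_Nil mult.commute)
  then have "hlin_defect H 1 0 (\<lambda>s u. he H (u ! 0)) b s' = (\<lambda>_. 0)"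
    by (auto simp: hlin_defect_def fun_eq_iff)
  then show "hlin_defect H 1 0 (\<lambda>s u. he H (u ! 0)) b s' \<in> qker H R 0"
    by (simp add: subspace_zero[OF qker_subspace])
qed

lemma bimap_tensor_right:
  fixes H :: "('k::field, 'b::finite) hopf"
  assumes H: "hopf_algebra H" and "n \<le> j"
    and t: "\<And>h. vsub (hmul H t h) (vscale (heps H h) t) \<in> Rplus_H H R"
  shows "bimap H R n (j + 0) (j + 1) (tensor_right j t)"
  unfolding tensor_right_def
proof (rule bimap_tail_map[OF H \<open>n \<le> j\<close>])
  fix b and s' :: "'b list"
  assume "s' \<in> words 0"
  then have s': "s' = []"
    by (simp add: words_def)
  define B where "B = vsub (hmul H t (kd b)) (vscale (heps H (kd b)) t)"
  have "B \<in> Rplus_H H R"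
    unfolding B_def by (rule t)
  have "hlin_defect H 0 1 (\<lambda>s u. t (s ! 0)) b s' = tens [\<lambda>d. (-1) * B d]"
    by (auto simp: hlin_defect_def fun_eq_iff s' words_0 sum_words_1 tact_coeff_Nil tact_coeff_single[OF H] tens_def
        B_def vsub_def vscale_def hmul_basis heps_def length_Suc_conv)
  also have "\<dots> \<in> qker H R 1"
    using subspace_scale[OF Rplus_subspace \<open>B \<in> Rplus_H H R\<close>, of "-1"]
    by (intro tens_in_qker[of _ _ 0]) simp_all
  finally show "hlin_defect H 0 1 (\<lambda>s u. t (s ! 0)) b s' \<in> qker H R 1" .
qed simp

lemma counit_last_comul_last:
  assumes H: "hopf_algebra H" and y: "y \<in> tpow (j + 1)"
  shows "counit_last H (j + 1) (comul_last H j y) = y"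
proof
  fix v :: "'b list"
  show "counit_last H (j + 1) (comul_last H j y) v = y v"
  proof (cases "length v = j + 1")
    case True
    then have v: "v = take j v @ [v ! j]"
      by (metis add.commute lessI plus_1_eq_Suc take_Suc_conv_app_nth take_all_iff order_refl)
    have "counit_last H (j + 1) (comul_last H j y) v
        = (\<Sum>c\<in>UNIV. y (take j v @ [c]) * (\<Sum>a\<in>UNIV. hd H c (v ! j) a * he H a))"
      using True
      by (simp add: counit_last_def comul_last_def tail_map_def sum_words_1 nth_append
          sum_distrib_left sum_distrib_right mult_ac, subst sum.swap, simp)
    also have "\<dots> = y v"
      by (simp add: hopf_counit_right[OF H] flip: v)
    finally show ?thesis .
  qed (use y in \<open>simp add: counit_last_def tail_map_def tpow_def\<close>)
qed

lemma counit_last_tensor_right: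
  assumes t: "heps H t = 1" and y: "y \<in> tpow j"
  shows "counit_last H j (tensor_right j t y) = y"
proof
  fix v :: "'b list"
  show "counit_last H j (tensor_right j t y) v = y v"
  proof (cases "length v = j")
    case True
    then have "counit_last H j (tensor_right j t y) v = (\<Sum>a\<in>UNIV. t a * he H a) * y v"
      by (simp add: counit_last_def tensor_right_def tail_map_def sum_words_1 words_0
          sum_distrib_left sum_distrib_right mult_ac)
    then show ?thesis
      using t by (simp add: heps_def)
  qed (use y in \<open>simp add: counit_last_def tail_map_def tpow_def\<close>)
qed

lemma bimod_summand_comul_last:
  fixes H :: "('k::field, 'b::finite) hopf"
  assumes H: "hopf_algebra H" and R: "hopf_subalgebra H R" and "n \<le> j"
  shows "bimod_summand H R n (j + 1) (j + 2)"
  unfolding bimod_summand_def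
proof (intro exI conjI ballI)
  show "bimap H R n (j + 1) (j + 2) (comul_last H j)"
    by (rule bimap_comul_last[OF H R \<open>n \<le> j\<close>])
  show "bimap H R n (j + 2) (j + 1) (counit_last H (j + 1))"
    using bimap_counit_last[OF H, of n "j + 1" R] \<open>n \<le> j\<close> by (simp add: add.assoc)
  fix x :: "'b list \<Rightarrow> 'k" assume "x \<in> tpow (j + 1)"
  then have "counit_last H (j + 1) (comul_last H j x) = x"
    by (rule counit_last_comul_last[OF H])
  then show "vsub (counit_last H (j + 1) (comul_last H j x)) x \<in> qker H R (j + 1)"
    by (simp add: subspace_zero[OF qker_subspace])
qed

lemma bimod_summand_integral:
  fixes H :: "('k::field, 'b::finite) hopf"
  assumes H: "hopf_algebra H" and "semisimple_ext H R" and "n \<le> j"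
  shows "bimod_summand H R n j (j + 1)"
proof -
  obtain t where t: "\<And>h. vsub (hmul H t h) (vscale (heps H h) t) \<in> Rplus_H H R" and "heps H t = 1"
    using \<open>semisimple_ext H R\<close> unfolding semisimple_ext_def by blast
  show ?thesis
    unfolding bimod_summand_def
  proof (intro exI conjI ballI)
    show "bimap H R n j (j + 1) (tensor_right j t)"
      using bimap_tensor_right[OF H \<open>n \<le> j\<close> t] by simp
    show "bimap H R n (j + 1) j (counit_last H j)"
      using bimap_counit_last[OF H \<open>n \<le> j\<close>, of R] by simp
    fix x :: "'b list \<Rightarrow> 'k" assume "x \<in> tpow j"
    then show "vsub (counit_last H j (tensor_right j t x)) x \<in> qker H R j"
      by (simp add: counit_last_tensor_right[OF \<open>heps H t = 1\<close>] subspace_zero[OF qker_subspace])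
  qed
qed

theorem mainTheorem14:
  fixes H :: "('k::field, 'b::finite) hopf" and R :: "('b \<Rightarrow> 'k) set"
  assumes "hopf_algebra H" and "hopf_subalgebra H R"
  shows "(\<forall>n. bimod_summand H R n (n + 1) (n + 2)) \<and>
         (\<forall>n m. n + 1 \<ge> 2 \<and> m \<ge> n + 1 \<longrightarrow> bimod_summand H R n (n + 1) (n + m)) \<and>
         (semisimple_ext H R \<longrightarrow> (\<forall>n m. m \<ge> n \<longrightarrow> bimod_summand H R n n (n + m)))"
proof (intro conjI allI impI)
  fix n
  show "bimod_summand H R n (n + 1) (n + 2)"
    using bimod_summand_comul_last[OF assms] by simp
next
  fix n m :: nat assume "n + 1 \<ge> 2 \<and> m \<ge> n + 1"
  then have m: "n + m = n + 1 + (m - 1)" by simp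
  have "bimod_summand H R n k (Suc k)" if "n + 1 \<le> k" for k
    using bimod_summand_comul_last[OF assms, of n "k - 1"] that by simp
  then show "bimod_summand H R n (n + 1) (n + m)"
    unfolding m by (intro bimod_summand_chain) simp_all
next
  fix n m :: nat assume "semisimple_ext H R"
  then show "bimod_summand H R n n (n + m)"
    using bimod_summand_integral[OF assms(1)] by (intro bimod_summand_chain) simp_all
qed

end
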